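(* For every wqo $A$ there exists $m\in\mathbb{N}$ such that $$1+\mathbf{h}(A)\;\le\;\mathbf{h}(\mathcal{P}_f(A))\;\le\;\begin{cases}2^{\mathbf{h}(A)} & \text{if } \mathbf{h}(A) \text{ is a limit ordinal},\\ 2^{\mathbf{h}(A)}\cdot m & \text{if } \mathbf{h}(A)\text{ is a successor ordinal.}\end{cases}$$
   Context: A quasi-order $(A,\le)$ is a well-quasi-order (wqo) if every infinite sequence $x_0,x_1,\dots$ in $A$ has indices $i<j$ with $x_i\le x_j$. For a wqo $A$, let $\mathrm{Bad}(A)$, $\mathrm{Dec}(A)$, $\mathrm{Inco}(A)$ be the trees of finite bad sequences (sequences with no $i<j$, $x_i\le x_j$), finite strictly decreasing sequences, and finite sequences of pairwise incomparable elements of $A$, respectively; the root is the empty sequence and the children of a sequence are its one-element extensions. These trees are well-founded; the rank of a node $s$ is $r(s)=\sup\{r(t)+1 : t \text{ a child of } s\}$. The maximal order type $\mathbf{o}(A)$, height $\mathbf{h}(A)$ and width $\mathbf{w}(A)$ are the ranks of the roots of $\mathrm{Bad}(A)$, $\mathrm{Dec}(A)$, $\mathrm{Inco}(A)$ respectively. $\mathcal{P}_f(A)$ denotes the set of finite subsets of $A$ ordered by the Hoare embedding: $S\le_H S'$ iff for every $a\in S$ there is $b\in S'$ with $a\le b$. Ordinal arithmetic (sum, product, exponentiation) is the usual one. *)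

theory Defs
  imports Main
begin

definition qo_on :: "'a set \<Rightarrow> ('a \<Rightarrow> 'a \<Rightarrow> bool) \<Rightarrow> bool" where
  "qo_on A le \<longleftrightarrow> (\<forall>x\<in>A. le x x) \<and> (\<forall>x\<in>A. \<forall>y\<in>A. \<forall>z\<in>A. le x y \<longrightarrow> le y z \<longrightarrow> le x z)"

definition wqo_on :: "'a set \<Rightarrow> ('a \<Rightarrow> 'a \<Rightarrow> bool) \<Rightarrow> bool" where
  "wqo_on A le \<longleftrightarrow> qo_on A le \<and>
     (\<forall>f :: nat \<Rightarrow> 'a. (\<forall>i. f i \<in> A) \<longrightarrow> (\<exists>i j. i < j \<and> le (f i) (f j)))"

definition strict :: "('a \<Rightarrow> 'a \<Rightarrow> bool) \<Rightarrow> 'a \<Rightarrow> 'a \<Rightarrow> bool" where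
  "strict le x y \<longleftrightarrow> le x y \<and> \<not> le y x"

definition Dec :: "'a set \<Rightarrow> ('a \<Rightarrow> 'a \<Rightarrow> bool) \<Rightarrow> 'a list set" where
  "Dec A le = {xs. set xs \<subseteq> A \<and> (\<forall>i j. i < j \<and> j < length xs \<longrightarrow> strict le (xs ! j) (xs ! i))}"

definition Pf :: "'a set \<Rightarrow> 'a set set" where
  "Pf A = {S. finite S \<and> S \<subseteq> A}"

definition hoare :: "('a \<Rightarrow> 'a \<Rightarrow> bool) \<Rightarrow> 'a set \<Rightarrow> 'a set \<Rightarrow> bool" where
  "hoare le S S' \<longleftrightarrow> (\<forall>a\<in>S. \<exists>b\<in>S'. le a b)"

text \<open>Ordinals are represented by well-order relations and compared with the library
  relation \<le>o.  Ranks of nodes of trees with node labels of type 'n are computed inside a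
  fixed well-order that is large enough (the successor cardinal of the set of all nodes).\<close>

definition bigW :: "'n list set rel" where
  "bigW = cardSuc (card_of (UNIV :: 'n list set))"

definition tree_child :: "'n list set \<Rightarrow> ('n list \<times> 'n list) set" where
  "tree_child T = {(s @ [x], s) | s x. s \<in> T \<and> s @ [x] \<in> T}"

text \<open>r(s) = sup { r(t) + 1 : t child of s }, i.e. the least element strictly above all r(t).\<close>
definition tree_rank :: "'n list set \<Rightarrow> 'n list \<Rightarrow> 'n list set" where
  "tree_rank T = wfrec (tree_child T)
     (\<lambda>f s. wo_rel.suc bigW (f ` {t. (t, s) \<in> tree_child T}))"

text \<open>The rank of the root (the empty sequence) as an ordinal: the initial segment of bigW
  strictly below that element.\<close>
definition tree_height :: "'n list set \<Rightarrow> 'n list set rel" where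
  "tree_height T = Restr bigW (underS bigW (tree_rank T []))"

definition height :: "'a set \<Rightarrow> ('a \<Rightarrow> 'a \<Rightarrow> bool) \<Rightarrow> 'a list set rel" where
  "height A le = tree_height (Dec A le)"

definition one_plus :: "'a rel \<Rightarrow> 'a option rel" where
  "one_plus r = {(None, None)} \<union> {(None, Some b) | b. b \<in> Field r}
                \<union> {(Some a, Some b) | a b. (a, b) \<in> r}"

text \<open>2^alpha: finite subsets of alpha, compared at the largest element of the symmetric
  difference (finite-support functions alpha \<rightarrow> 2, anti-lexicographically).\<close>
definition two_pow :: "'a rel \<Rightarrow> 'a set rel" where
  "two_pow r = {(S, T). finite S \<and> S \<subseteq> Field r \<and> finite T \<and> T \<subseteq> Field r \<and>
      (S = T \<or> (\<exists>x \<in> T - S. \<forall>y \<in> (S - T) \<union> (T - S). (y, x) \<in> r))}"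

text \<open>alpha * m for m natural: m consecutive copies of alpha.\<close>
definition times_nat :: "'a rel \<Rightarrow> nat \<Rightarrow> (nat \<times> 'a) rel" where
  "times_nat r m = {((i, a), (j, b)) | i j a b. i < m \<and> j < m \<and> a \<in> Field r \<and> b \<in> Field r \<and>
      (i < j \<or> (i = j \<and> (a, b) \<in> r))}"

definition is_successor_ord :: "'a rel \<Rightarrow> bool" where
  "is_successor_ord r \<longleftrightarrow> (\<exists>a \<in> Field r. \<forall>b \<in> Field r. (b, a) \<in> r)"

definition is_limit_ord :: "'a rel \<Rightarrow> bool" where
  "is_limit_ord r \<longleftrightarrow> Field r \<noteq> {} \<and> \<not> is_successor_ord r"

end

(*
  Lower bound: a strictly decreasing sequence a1 > ... > an in A gives the strictly
  decreasing sequence {a1} > ... > {an} of finite sets, which can moreover be extended by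
  the empty set; so the tree of decreasing sequences of Pf(A) has height at least 1 + h(A).

  Upper bound: up to Hoare equivalence a finite S is determined by the equivalence classes
  of its maximal elements.  Grouping them by height, S yields counts c_S(beta) for
  beta < h(A), each bounded by the finitely many classes of that height (elements of equal
  height are never strictly comparable, and A is a wqo).  If S' < S in the Hoare order, then
  at the largest height where the counts differ S has more.  Writing ordinals as b + k with b
  zero or a limit, the levels b + k of a block lying wholly below h(A) receive consecutive
  disjoint ranges of slots inside the same block, so the counts become a finite subset of
  h(A), compared in 2^h(A).  Only a last finite block can stick out, which happens only if
  h(A) is a successor; its counts are packed into a number below some m.  The resulting
  codes strictly decrease along every branch, bounding h(Pf(A)) by 2^h(A) resp. 2^h(A) * m.
*)
theory Submission
  imports Defs "HOL-Library.Multiset"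
begin

unbundle cardinal_syntax

lemma Well_orderD:
  assumes "Well_order r"
  shows "trans r" "antisym r" "\<And>x. x \<in> Field r \<Longrightarrow> (x, x) \<in> r"
    "\<And>x y. x \<in> Field r \<Longrightarrow> y \<in> Field r \<Longrightarrow> x \<noteq> y \<Longrightarrow> (x, y) \<in> r \<or> (y, x) \<in> r"
    "wf (r - Id)"
  using assms unfolding well_order_on_def linear_order_on_def partial_order_on_def
    preorder_on_def refl_on_def total_on_def by auto

lemma Well_orderI:
  assumes "r \<subseteq> Field r \<times> Field r" "\<And>x. x \<in> Field r \<Longrightarrow> (x, x) \<in> r" "trans r" "antisym r"
    "\<And>x y. x \<in> Field r \<Longrightarrow> y \<in> Field r \<Longrightarrow> x \<noteq> y \<Longrightarrow> (x, y) \<in> r \<or> (y, x) \<in> r"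
    "wf (r - Id)"
  shows "Well_order r"
  using assms unfolding well_order_on_def linear_order_on_def partial_order_on_def
    preorder_on_def refl_on_def total_on_def by auto

lemma Well_order_less_le_trans:
  assumes "Well_order r" "(x, y) \<in> r" "x \<noteq> y" "(y, z) \<in> r"
  shows "(x, z) \<in> r \<and> x \<noteq> z"
  using Well_orderD(1,2)[OF assms(1)] assms(2-4) unfolding trans_def antisym_def by blast

lemma Well_order_le_less_trans:
  assumes "Well_order r" "(x, y) \<in> r" "(y, z) \<in> r" "y \<noteq> z"
  shows "(x, z) \<in> r \<and> x \<noteq> z"
  using Well_orderD(1,2)[OF assms(1)] assms(2-4) unfolding trans_def antisym_def by blast

lemma Well_order_finite_has_max:
  assumes r: "Well_order r" and "finite D" "D \<noteq> {}" "D \<subseteq> Field r"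
  obtains z where "z \<in> D" "\<And>y. y \<in> D \<Longrightarrow> (y, z) \<in> r"
proof -
  have "\<exists>z\<in>D. \<forall>y\<in>D. (y, z) \<in> r"
    using assms(2-4)
  proof (induction D rule: finite_ne_induct)
    case (singleton x)
    then show ?case using Well_orderD(3)[OF r] by auto
  next
    case (insert x D)
    then obtain z where z: "z \<in> D" "\<forall>y\<in>D. (y, z) \<in> r" by auto
    show ?case
    proof (cases "(x, z) \<in> r")
      case True
      then show ?thesis using z by auto
    next
      case False
      then have "(z, x) \<in> r" using Well_orderD(4)[OF r, of x z] Well_orderD(3)[OF r] insert z by auto
      then have "\<forall>y\<in>D. (y, x) \<in> r" using z Well_orderD(1)[OF r] unfolding trans_def by blast
      then show ?thesis using Well_orderD(3)[OF r] insert by auto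
    qed
  qed
  then show thesis using that by blast
qed

text \<open>If \<open>f\<close> is strictly monotone from \<open>r\<close> to \<open>r'\<close> but \<open>r'\<close> were shorter, then composing
  \<open>f\<close> with an isomorphism onto a proper initial segment of \<open>r\<close> would give a strictly
  monotone self-map of \<open>r\<close> sending some point below itself, which a well-order forbids.\<close>
lemma ordLeq_if_strict_mono:
  assumes r: "Well_order r" and r': "Well_order r'"
    and F: "\<And>x. x \<in> Field r \<Longrightarrow> f x \<in> Field r'"
    and M: "\<And>x y. (x, y) \<in> r \<Longrightarrow> x \<noteq> y \<Longrightarrow> (f x, f y) \<in> r' \<and> f x \<noteq> f y"
  shows "r \<le>o r'"
proof (rule ccontr)
  assume "\<not> r \<le>o r'"
  then have "r' <o r" using not_ordLeq_iff_ordLess r r' by blast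
  then obtain a where a: "a \<in> Field r" and "r' =o Restr r (underS r a)"
    using ordLess_iff_ordIso_Restr r r' by blast
  then obtain g where g: "iso r' (Restr r (underS r a)) g" unfolding ordIso_def by auto
  have "Field (Restr r (underS r a)) = underS r a"
    by (rule Field_Restr_ofilter[OF r]) (simp add: r wo_rel.underS_ofilter wo_rel_def)
  then have bij: "bij_betw g (Field r') (underS r a)"
    and ord: "\<And>x y. x \<in> Field r' \<Longrightarrow> y \<in> Field r' \<Longrightarrow> (x, y) \<in> r' \<Longrightarrow> (g x, g y) \<in> Restr r (underS r a)"
    using g unfolding iso_iff2 by auto
  define h where "h = g \<circ> f"
  have hF: "h x \<in> underS r a" if "x \<in> Field r" for x
    using bij F[OF that] unfolding h_def bij_betw_def by auto
  have hM: "(h x, h y) \<in> r \<and> h x \<noteq> h y" if "(x, y) \<in> r" "x \<noteq> y" for x y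
  proof -
    have "x \<in> Field r" "y \<in> Field r" using that unfolding Field_def by auto
    then show ?thesis
      using M[OF that] ord[of "f x" "f y"] F bij unfolding h_def bij_betw_def inj_on_def by auto
  qed
  have above: "(x, h x) \<in> r" if "x \<in> Field r" for x
  proof (rule ccontr)
    assume "(x, h x) \<notin> r"
    then have "x \<in> {x \<in> Field r. (x, h x) \<notin> r}" using that by auto
    then obtain z where z: "z \<in> Field r" "(z, h z) \<notin> r"
      and zmin: "\<And>y. (y, z) \<in> r - Id \<Longrightarrow> \<not> (y \<in> Field r \<and> (y, h y) \<notin> r)"
      by (rule wfE_min[OF Well_orderD(5)[OF r]]) blast
    have hz: "h z \<in> Field r" using hF z underS_Field by fastforce
    have "h z \<noteq> z" using z Well_orderD(3)[OF r] by auto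
    then have "(h z, z) \<in> r" using Well_orderD(4)[OF r] z hz by auto
    then have "(h (h z), h z) \<in> r" "h (h z) \<noteq> h z" using hM \<open>h z \<noteq> z\<close> by auto
    moreover have "(h z, h (h z)) \<in> r" using zmin \<open>(h z, z) \<in> r\<close> \<open>h z \<noteq> z\<close> hz by auto
    ultimately show False using Well_orderD(2)[OF r] unfolding antisym_def by blast
  qed
  have "(a, h a) \<in> r" using above a by auto
  moreover have "(h a, a) \<in> r" "h a \<noteq> a" using hF[OF a] unfolding underS_def by auto
  ultimately show False using Well_orderD(2)[OF r] unfolding antisym_def by blast
qed

lemma Field_two_pow: "Field (two_pow r) = {S. finite S \<and> S \<subseteq> Field r}"
  unfolding two_pow_def Field_def by auto

lemma two_pow_antisym:
  assumes r: "Well_order r"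
  shows "antisym (two_pow r)"
proof (rule antisymI)
  fix S T assume ST: "(S, T) \<in> two_pow r" "(T, S) \<in> two_pow r"
  show "S = T"
  proof (rule ccontr)
    assume "S \<noteq> T"
    then obtain x y where x: "x \<in> T - S" "\<forall>z \<in> (S - T) \<union> (T - S). (z, x) \<in> r"
      and y: "y \<in> S - T" "\<forall>z \<in> (T - S) \<union> (S - T). (z, y) \<in> r"
      using ST unfolding two_pow_def by auto
    then have "x = y" using Well_orderD(2)[OF r] unfolding antisym_def by blast
    then show False using x y by auto
  qed
qed

text \<open>The largest element of \<open>S \<triangle> U\<close> is the larger of the largest elements of
  \<open>S \<triangle> T\<close> and \<open>T \<triangle> U\<close>.\<close>
lemma two_pow_trans:
  assumes r: "Well_order r"
  shows "trans (two_pow r)"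
proof (rule transI)
  fix S T U assume a: "(S, T) \<in> two_pow r" "(T, U) \<in> two_pow r"
  have fin: "finite S" "S \<subseteq> Field r" "finite U" "U \<subseteq> Field r" using a unfolding two_pow_def by auto
  show "(S, U) \<in> two_pow r"
  proof (cases "S = T \<or> T = U")
    case True
    then show ?thesis using a by auto
  next
    case False
    then obtain x y where x: "x \<in> T - S" "\<forall>z \<in> (S - T) \<union> (T - S). (z, x) \<in> r"
      and y: "y \<in> U - T" "\<forall>z \<in> (T - U) \<union> (U - T). (z, y) \<in> r"
      using a unfolding two_pow_def by auto
    have "x \<in> Field r" "y \<in> Field r" using x y a unfolding two_pow_def by auto
    moreover have "x \<noteq> y" using x y by auto
    ultimately consider "(x, y) \<in> r" | "(y, x) \<in> r" using Well_orderD(4)[OF r] by blast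
    then show ?thesis
    proof cases
      case 1
      have "y \<notin> S" using x y 1 \<open>x \<noteq> y\<close> Well_orderD(2)[OF r] unfolding antisym_def by blast
      moreover have "\<forall>z \<in> (S - U) \<union> (U - S). (z, y) \<in> r"
        using x y 1 Well_orderD(1)[OF r] unfolding trans_def by blast
      ultimately show ?thesis using y fin unfolding two_pow_def by auto
    next
      case 2
      have "x \<in> U" using x y 2 \<open>x \<noteq> y\<close> Well_orderD(2)[OF r] unfolding antisym_def by blast
      moreover have "\<forall>z \<in> (S - U) \<union> (U - S). (z, x) \<in> r"
        using x y 2 Well_orderD(1)[OF r] unfolding trans_def by blast
      ultimately show ?thesis using x fin unfolding two_pow_def by auto
    qed
  qed
qed

lemma two_pow_total:
  assumes r: "Well_order r" and ST: "S \<in> Field (two_pow r)" "T \<in> Field (two_pow r)"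
  shows "(S, T) \<in> two_pow r \<or> (T, S) \<in> two_pow r"
proof (cases "S = T")
  case True
  then show ?thesis using ST unfolding Field_two_pow unfolding two_pow_def by auto
next
  case False
  let ?D = "(S - T) \<union> (T - S)"
  have fin: "finite S" "S \<subseteq> Field r" "finite T" "T \<subseteq> Field r" using ST unfolding Field_two_pow by auto
  then have "finite ?D" "?D \<noteq> {}" "?D \<subseteq> Field r" using False by auto
  then obtain z where z: "z \<in> ?D" "\<And>y. y \<in> ?D \<Longrightarrow> (y, z) \<in> r"
    by (rule Well_order_finite_has_max[OF r]) blast
  show ?thesis
  proof (cases "z \<in> T - S")
    case True
    then show ?thesis using z fin unfolding two_pow_def by blast
  next
    case False
    then have "z \<in> S - T" "\<forall>y\<in>(T - S) \<union> (S - T). (y, z) \<in> r" using z by auto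
    then show ?thesis using fin unfolding two_pow_def by blast
  qed
qed

text \<open>Replacing the elements of \<open>S - T\<close> by those of \<open>T - S\<close>, which include one above
  all of them, is a multiset-ordering step.\<close>
lemma wf_two_pow:
  assumes r: "Well_order r"
  shows "wf (two_pow r - Id)"
proof (rule wf_subset)
  show "wf (inv_image (mult (r - Id)) mset_set)"
    using wf_mult[OF Well_orderD(5)[OF r]] by (rule wf_inv_image)
  show "two_pow r - Id \<subseteq> inv_image (mult (r - Id)) mset_set"
  proof (rule subrelI)
    fix S T assume ST: "(S, T) \<in> two_pow r - Id"
    have fin: "finite S" "finite T" using ST unfolding two_pow_def by auto
    obtain x where x: "x \<in> T - S" "\<forall>z \<in> (S - T) \<union> (T - S). (z, x) \<in> r"
      using ST unfolding two_pow_def by auto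
    have split: "mset_set X = mset_set (X \<inter> Y) + mset_set (X - Y)" if "finite X" for X Y :: "'a set"
    proof -
      have "mset_set (X \<inter> Y \<union> (X - Y)) = mset_set (X \<inter> Y) + mset_set (X - Y)"
        by (rule mset_set_Union) (use that in auto)
      then show ?thesis by (simp add: Int_Diff_Un)
    qed
    have "(mset_set (S \<inter> T) + mset_set (S - T), mset_set (S \<inter> T) + mset_set (T - S)) \<in> mult (r - Id)"
    proof (rule one_step_implies_mult)
      show "mset_set (T - S) \<noteq> {#}" using x fin by (auto simp: mset_set_empty_iff)
      show "\<forall>k\<in>#mset_set (S - T). \<exists>j\<in>#mset_set (T - S). (k, j) \<in> r - Id"
        using x fin by auto
    qed
    then show "(S, T) \<in> inv_image (mult (r - Id)) mset_set"
      using split[of S T] split[of T S] fin by (simp add: Int_commute)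
  qed
qed

lemma Well_order_two_pow:
  assumes r: "Well_order r"
  shows "Well_order (two_pow r)"
proof (rule Well_orderI)
  show "two_pow r \<subseteq> Field (two_pow r) \<times> Field (two_pow r)" unfolding Field_def by auto
  show "\<And>x. x \<in> Field (two_pow r) \<Longrightarrow> (x, x) \<in> two_pow r"
    unfolding Field_two_pow unfolding two_pow_def by auto
  show "trans (two_pow r)" "antisym (two_pow r)" "wf (two_pow r - Id)"
    using two_pow_trans two_pow_antisym wf_two_pow r by blast+
  show "\<And>S T. S \<in> Field (two_pow r) \<Longrightarrow> T \<in> Field (two_pow r) \<Longrightarrow> S \<noteq> T \<Longrightarrow>
      (S, T) \<in> two_pow r \<or> (T, S) \<in> two_pow r"
    using two_pow_total r by blast
qed

lemma Field_times_nat: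
  assumes "Well_order r"
  shows "Field (times_nat r m) = {(i, a). i < m \<and> a \<in> Field r}"
proof (intro equalityI subsetI)
  fix p assume "p \<in> {(i, a). i < m \<and> a \<in> Field r}"
  then show "p \<in> Field (times_nat r m)"
    using Well_orderD(3)[OF assms] unfolding times_nat_def by (auto intro!: FieldI1[of p p])
qed (auto simp: Field_def times_nat_def)

lemma Well_order_times_nat:
  assumes r: "Well_order r"
  shows "Well_order (times_nat r m)"
proof (rule Well_orderI)
  show "times_nat r m \<subseteq> Field (times_nat r m) \<times> Field (times_nat r m)" unfolding Field_def by auto
  show "\<And>x. x \<in> Field (times_nat r m) \<Longrightarrow> (x, x) \<in> times_nat r m"
    unfolding Field_times_nat[OF r] using Well_orderD(3)[OF r] unfolding times_nat_def by auto
  show "trans (times_nat r m)"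
    using Well_orderD(1)[OF r] unfolding trans_def times_nat_def by auto
  show "antisym (times_nat r m)"
    using Well_orderD(2)[OF r] unfolding antisym_def times_nat_def by auto
  show "\<And>x y. x \<in> Field (times_nat r m) \<Longrightarrow> y \<in> Field (times_nat r m) \<Longrightarrow> x \<noteq> y \<Longrightarrow>
      (x, y) \<in> times_nat r m \<or> (y, x) \<in> times_nat r m"
    unfolding Field_times_nat[OF r] using Well_orderD(4)[OF r] unfolding times_nat_def by (fastforce simp: nat_neq_iff)
  show "wf (times_nat r m - Id)"
    by (rule wf_subset[OF wf_lex_prod[OF wf_less_than Well_orderD(5)[OF r]]])
      (auto simp: times_nat_def)
qed

lemma Field_one_plus:
  assumes "Well_order r"
  shows "Field (one_plus r) = insert None (Some ` Field r)"
proof (intro equalityI subsetI)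
  fix p assume "p \<in> insert None (Some ` Field r)"
  then show "p \<in> Field (one_plus r)"
    using Well_orderD(3)[OF assms] unfolding one_plus_def by (auto intro!: FieldI1[of p p])
qed (auto simp: Field_def one_plus_def)

lemma Well_order_one_plus:
  assumes r: "Well_order r"
  shows "Well_order (one_plus r)"
proof (rule Well_orderI)
  show "one_plus r \<subseteq> Field (one_plus r) \<times> Field (one_plus r)" unfolding Field_def by auto
  show "\<And>x. x \<in> Field (one_plus r) \<Longrightarrow> (x, x) \<in> one_plus r"
    unfolding Field_one_plus[OF r] using Well_orderD(3)[OF r] unfolding one_plus_def by auto
  show "trans (one_plus r)"
    using Well_orderD(1)[OF r] unfolding trans_def one_plus_def by (auto intro: FieldI2)
  show "antisym (one_plus r)"
    using Well_orderD(2)[OF r] unfolding antisym_def one_plus_def by auto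
  show "\<And>x y. x \<in> Field (one_plus r) \<Longrightarrow> y \<in> Field (one_plus r) \<Longrightarrow> x \<noteq> y \<Longrightarrow>
      (x, y) \<in> one_plus r \<or> (y, x) \<in> one_plus r"
    unfolding Field_one_plus[OF r] using Well_orderD(4)[OF r] unfolding one_plus_def by fastforce
  let ?rank = "case_option (0::nat, undefined) (Pair 1)"
  show "wf (one_plus r - Id)"
  proof (rule wf_subset)
    show "wf (inv_image (less_than <*lex*> (r - Id)) ?rank)"
      using Well_orderD(5)[OF r] by (intro wf_inv_image wf_lex_prod wf_less_than)
    show "one_plus r - Id \<subseteq> inv_image (less_than <*lex*> (r - Id)) ?rank"
      by (auto simp: one_plus_def)
  qed
qed

lemma one_plus_ordLeq_if_strict_mono:
  assumes r: "Well_order r" and r': "Well_order r'"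
    and f: "\<And>x. x \<in> Field r \<Longrightarrow> f x \<in> Field r'"
      "\<And>x y. (x, y) \<in> r \<Longrightarrow> x \<noteq> y \<Longrightarrow> (f x, f y) \<in> r' \<and> f x \<noteq> f y"
    and z: "z \<in> Field r'" "\<And>x. x \<in> Field r \<Longrightarrow> (z, f x) \<in> r' \<and> z \<noteq> f x"
  shows "one_plus r \<le>o r'"
proof (rule ordLeq_if_strict_mono[OF Well_order_one_plus[OF r] r', of "case_option z f"])
  show "case_option z f x \<in> Field r'" if "x \<in> Field (one_plus r)" for x
    using that f(1) z(1) unfolding Field_one_plus[OF r] by auto
  show "(case_option z f x, case_option z f y) \<in> r' \<and> case_option z f x \<noteq> case_option z f y"
    if "(x, y) \<in> one_plus r" "x \<noteq> y" for x y
    using that f(2) z(2) unfolding one_plus_def by auto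
qed

lemma Well_order_bigW: "Well_order (bigW :: 'n list set rel)"
  unfolding bigW_def by (rule cardSuc_Well_order[OF card_of_Card_order])

lemma wo_rel_bigW: "wo_rel (bigW :: 'n list set rel)"
  using Well_order_bigW unfolding wo_rel_def .

abbreviation bigW_less :: "'n list set \<Rightarrow> 'n list set \<Rightarrow> bool" where
  "bigW_less x y \<equiv> (x, y) \<in> bigW \<and> x \<noteq> y"

text \<open>\<open>bigW\<close> is a regular cardinal above \<open>|UNIV :: 'n list set|\<close>, so no set of at most
  that size is cofinal in it.\<close>
lemma AboveS_bigW_nonempty:
  assumes B: "B \<subseteq> Field (bigW :: 'n list set rel)" "|B| \<le>o |UNIV :: 'n list set|"
  shows "AboveS (bigW :: 'n list set rel) B \<noteq> {}"
proof -
  let ?r = "|UNIV :: 'n list set|"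
  let ?W = "bigW :: 'n list set rel"
  let ?C = "B \<union> (\<Union>b\<in>B. underS ?W b)"
  have r: "Card_order ?r" by (rule card_of_Card_order)
  have inf: "\<not> finite (UNIV :: 'n list set)" by (rule infinite_UNIV_listI)
  have "|underS ?W b| \<le>o ?r" if "b \<in> B" for b
  proof -
    have "|underS ?W b| <o ?W"
      using that B(1) card_of_underS[OF cardSuc_Card_order[OF r]] unfolding bigW_def by blast
    then show ?thesis
      using cardSuc_ordLeq_ordLess[OF r card_of_Card_order, of "underS ?W b"] unfolding bigW_def by simp
  qed
  then have "|\<Union>b\<in>B. underS ?W b| \<le>o ?r"
    using card_of_UNION_ordLeq_infinite[OF inf B(2), of "underS ?W"] by simp
  moreover have "\<not> finite (Field ?r)" using inf by (simp add: Field_card_of)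
  ultimately have "|?C| \<le>o ?r" using card_of_Un_ordLeq_infinite_Field[OF _ B(2) _ r] by blast
  moreover have "?r <o |Field ?W|"
    using cardSuc_greater[OF r] ordIso_symmetric[OF card_of_Field_ordIso[OF cardSuc_Card_order[OF r]]]
    unfolding bigW_def by (blast intro: ordLess_ordIso_trans)
  ultimately have "|?C| <o |Field ?W|" by (rule ordLeq_ordLess_trans)
  then have "\<not> Field ?W \<subseteq> ?C" using card_of_mono1 not_ordLess_ordLeq by blast
  then obtain i where i: "i \<in> Field ?W" "i \<notin> ?C" by blast
  have "(b, i) \<in> ?W \<and> b \<noteq> i" if "b \<in> B" for b
    using i that B(1) Well_orderD(4)[OF Well_order_bigW, of b i] unfolding underS_def by blast
  then show ?thesis using i unfolding AboveS_def by blast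
qed

definition tree_children :: "'n list set \<Rightarrow> 'n list \<Rightarrow> 'n list set" where
  "tree_children T s = {t. (t, s) \<in> tree_child T}"

lemma tree_children_eq: "tree_children T s = (\<lambda>x. s @ [x]) ` {x. s \<in> T \<and> s @ [x] \<in> T}"
  unfolding tree_children_def tree_child_def by auto

lemma tree_childD: "(t, s) \<in> tree_child T \<Longrightarrow> \<exists>x. t = s @ [x] \<and> s \<in> T \<and> t \<in> T"
  unfolding tree_child_def by auto

lemma tree_rank_unfold:
  assumes "wf (tree_child T)"
  shows "tree_rank T s = wo_rel.suc bigW (tree_rank T ` tree_children T s)"
proof -
  have "tree_rank T s =
      (\<lambda>f s. wo_rel.suc bigW (f ` {t. (t, s) \<in> tree_child T})) (cut (tree_rank T) (tree_child T) s) s"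
    unfolding tree_rank_def by (rule wfrec[OF assms])
  moreover have "cut (tree_rank T) (tree_child T) s ` {t. (t, s) \<in> tree_child T} = tree_rank T ` tree_children T s"
    unfolding tree_children_def by (auto simp: cut_apply)
  ultimately show ?thesis by (simp only:)
qed

lemma tree_rank_in_Field_AboveS:
  fixes T :: "'n list set"
  assumes wf: "wf (tree_child T)"
  shows "tree_rank T s \<in> Field bigW \<and> AboveS bigW (tree_rank T ` tree_children T s) \<noteq> {}"
  using wf
proof (induction s rule: wf_induct_rule)
  case (less s)
  have sub: "tree_rank T ` tree_children T s \<subseteq> Field bigW"
    using less unfolding tree_children_def by auto
  have "|tree_rank T ` tree_children T s| \<le>o |UNIV :: 'n list set|"
    using card_of_image card_of_mono1[of "tree_children T s" UNIV] ordLeq_transitive by blast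
  then have above: "AboveS bigW (tree_rank T ` tree_children T s) \<noteq> {}"
    by (rule AboveS_bigW_nonempty[OF sub])
  have "tree_rank T s \<in> Field bigW"
    unfolding tree_rank_unfold[OF wf, of s] by (rule wo_rel.suc_inField[OF wo_rel_bigW sub above])
  with above show ?case by blast
qed

lemma tree_rank_in_Field: "wf (tree_child T) \<Longrightarrow> tree_rank T s \<in> Field bigW"
  using tree_rank_in_Field_AboveS by blast

lemma tree_rank_child_less:
  assumes wf: "wf (tree_child T)" and t: "t \<in> tree_children T s"
  shows "(tree_rank T t, tree_rank T s) \<in> bigW \<and> tree_rank T t \<noteq> tree_rank T s"
proof -
  have sub: "tree_rank T ` tree_children T s \<subseteq> Field bigW" using tree_rank_in_Field[OF wf] by auto
  show ?thesis
    using wo_rel.suc_greater[OF wo_rel_bigW sub] tree_rank_in_Field_AboveS[OF wf, of s] t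
      tree_rank_unfold[OF wf, of s] by auto
qed

lemma tree_rank_below_child:
  assumes wf: "wf (tree_child T)" and y: "(y, tree_rank T s) \<in> bigW" "y \<noteq> tree_rank T s"
  shows "\<exists>t\<in>tree_children T s. (y, tree_rank T t) \<in> bigW"
proof (rule ccontr)
  assume none: "\<not> ?thesis"
  have yF: "y \<in> Field bigW" using y(1) by (rule FieldI1)
  have "y \<in> AboveS bigW (tree_rank T ` tree_children T s)"
    unfolding AboveS_def
  proof (safe intro!: yF)
    fix t assume "t \<in> tree_children T s"
    then have "(y, tree_rank T t) \<notin> bigW" using none by blast
    then show "(tree_rank T t, y) \<in> bigW" "y = tree_rank T t \<Longrightarrow> False"
      using Well_orderD(4)[OF Well_order_bigW, of y "tree_rank T t"] Well_orderD(3)[OF Well_order_bigW, of y]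
        yF tree_rank_in_Field[OF wf, of t] by auto
  qed
  then have "(tree_rank T s, y) \<in> bigW"
    using wo_rel.suc_least_AboveS[OF wo_rel_bigW] tree_rank_unfold[OF wf] by metis
  then show False using y Well_orderD(2)[OF Well_order_bigW] unfolding antisym_def by blast
qed

definition prefix_closed :: "'n list set \<Rightarrow> bool" where
  "prefix_closed T \<longleftrightarrow> (\<forall>s x. s @ [x] \<in> T \<longrightarrow> s \<in> T)"

lemma prefix_closed_append: "prefix_closed T \<Longrightarrow> s @ u \<in> T \<Longrightarrow> s \<in> T"
  by (induction u rule: rev_induct) (auto simp: prefix_closed_def simp flip: append_assoc)

lemma snoc_in_tree_children: "s \<in> T \<Longrightarrow> s @ [x] \<in> T \<Longrightarrow> s @ [x] \<in> tree_children T s"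
  unfolding tree_children_eq by blast

lemma tree_rank_append_less:
  assumes wf: "wf (tree_child T)" and pc: "prefix_closed T" and su: "s @ u \<in> T" "u \<noteq> []"
  shows "(tree_rank T (s @ u), tree_rank T s) \<in> bigW \<and> tree_rank T (s @ u) \<noteq> tree_rank T s"
  using su
proof (induction u rule: rev_induct)
  case (snoc x u)
  have su: "s @ u \<in> T" using prefix_closed_append[OF pc, of "s @ u" "[x]"] snoc by simp
  then have c: "(tree_rank T (s @ u @ [x]), tree_rank T (s @ u)) \<in> bigW \<and> tree_rank T (s @ u @ [x]) \<noteq> tree_rank T (s @ u)"
    using tree_rank_child_less[OF wf snoc_in_tree_children[OF su]] snoc by simp
  show ?case
  proof (cases "u = []")
    case True
    then show ?thesis using c by simp
  next
    case False
    then show ?thesis using snoc su c Well_order_less_le_trans[OF Well_order_bigW] by auto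
  qed
qed simp

lemma tree_rank_attained:
  assumes wf: "wf (tree_child T)"
  shows "s \<in> T \<Longrightarrow> (y, tree_rank T s) \<in> bigW \<Longrightarrow> y \<noteq> tree_rank T s \<Longrightarrow>
    \<exists>u. u \<noteq> [] \<and> s @ u \<in> T \<and> tree_rank T (s @ u) = y"
  using wf
proof (induction s rule: wf_induct_rule)
  case (less s)
  obtain t where t: "t \<in> tree_children T s" "(y, tree_rank T t) \<in> bigW"
    using tree_rank_below_child[OF wf less(3,4)] by blast
  obtain x where x: "t = s @ [x]" "s @ [x] \<in> T" using t(1) unfolding tree_children_eq by auto
  show ?case
  proof (cases "y = tree_rank T t")
    case True
    then show ?thesis using x by (intro exI[of _ "[x]"]) auto
  next
    case False
    have "(t, s) \<in> tree_child T" using t(1) unfolding tree_children_def by auto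
    then obtain u where "u \<noteq> []" "t @ u \<in> T" "tree_rank T (t @ u) = y"
      using less(1) x t(2) False by blast
    then show ?thesis using x by (intro exI[of _ "x # u"]) auto
  qed
qed

lemma tree_rank_cong:
  assumes wf: "wf (tree_child T)"
  shows "(\<forall>w. p @ w \<in> T \<longleftrightarrow> q @ w \<in> T) \<Longrightarrow> tree_rank T p = tree_rank T q"
  using wf
proof (induction p arbitrary: q rule: wf_induct_rule)
  case (less p)
  have same: "{x. p \<in> T \<and> p @ [x] \<in> T} = {x. q \<in> T \<and> q @ [x] \<in> T}"
    using less(2)[rule_format, of "[]"] less(2)[rule_format, of "[_]"] by auto
  have "tree_rank T (p @ [x]) = tree_rank T (q @ [x])" if "p \<in> T" "p @ [x] \<in> T" for x
  proof (rule less(1))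
    show "(p @ [x], p) \<in> tree_child T" using that unfolding tree_child_def by auto
    show "\<forall>w. (p @ [x]) @ w \<in> T \<longleftrightarrow> (q @ [x]) @ w \<in> T" using less(2) by simp
  qed
  then have "tree_rank T ` tree_children T p = tree_rank T ` tree_children T q"
    unfolding tree_children_eq image_image same[symmetric] by (intro image_cong) auto
  then show ?case using tree_rank_unfold[OF wf] by metis
qed

lemma Field_tree_height: "Field (tree_height T) = underS bigW (tree_rank T [])"
  unfolding tree_height_def
  by (rule Field_Restr_ofilter[OF Well_order_bigW]) (rule wo_rel.underS_ofilter[OF wo_rel_bigW])

lemma Well_order_tree_height: "Well_order (tree_height T)"
  unfolding tree_height_def by (rule Well_order_Restr[OF Well_order_bigW])

text \<open>Send an ordinal \<open>y\<close> to the least value of \<open>g\<close> on the nodes of rank \<open>y\<close>: below a node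
  of rank \<open>y'\<close> there is a node of each smaller rank \<open>y\<close>, where \<open>g\<close> is smaller.\<close>
lemma tree_height_strict_mono_map:
  fixes T :: "'n list set" and W :: "'b rel"
  assumes wf: "wf (tree_child T)" and W: "Well_order W"
    and g: "\<And>t. t \<in> T \<Longrightarrow> t \<noteq> [] \<Longrightarrow> g t \<in> Field W"
      "\<And>t u. t \<in> T \<Longrightarrow> t \<noteq> [] \<Longrightarrow> t @ u \<in> T \<Longrightarrow> u \<noteq> [] \<Longrightarrow>
         (g (t @ u), g t) \<in> W \<and> g (t @ u) \<noteq> g t"
    and root: "[] \<in> T"
  obtains f where "\<And>y. y \<in> Field (tree_height T) \<Longrightarrow> \<exists>t\<in>T. t \<noteq> [] \<and> f y = g t"
    "\<And>y y'. (y, y') \<in> tree_height T \<Longrightarrow> y \<noteq> y' \<Longrightarrow> (f y, f y') \<in> W \<and> f y \<noteq> f y'"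
proof -
  define nodes where "nodes y = {t \<in> T. t \<noteq> [] \<and> tree_rank T t = y}" for y
  define f where "f y = wo_rel.minim W (g ` nodes y)" for y
  have woW: "wo_rel W" using W unfolding wo_rel_def .
  have sub: "g ` nodes y \<subseteq> Field W" for y using g(1) unfolding nodes_def by auto
  have f_in: "f y \<in> g ` nodes y" if "y \<in> Field (tree_height T)" for y
  proof -
    have "(y, tree_rank T []) \<in> bigW" "y \<noteq> tree_rank T []"
      using that unfolding Field_tree_height underS_def by auto
    then obtain u where "u \<noteq> []" "[] @ u \<in> T" "tree_rank T ([] @ u) = y"
      using tree_rank_attained[OF wf root] by blast
    then have "nodes y \<noteq> {}" unfolding nodes_def by auto
    then show ?thesis unfolding f_def using wo_rel.minim_in[OF woW sub] by blast
  qed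
  show thesis
  proof (rule that)
    show "\<exists>t\<in>T. t \<noteq> [] \<and> f y = g t" if "y \<in> Field (tree_height T)" for y
      using f_in[OF that] unfolding nodes_def by blast
    fix y y' assume yy': "(y, y') \<in> tree_height T" "y \<noteq> y'"
    have y'F: "y' \<in> Field (tree_height T)" using yy'(1) by (rule FieldI2)
    obtain t where t: "t \<in> T" "t \<noteq> []" "tree_rank T t = y'" "f y' = g t"
      using f_in[OF y'F] unfolding nodes_def by blast
    have "(y, tree_rank T t) \<in> bigW" "y \<noteq> tree_rank T t"
      using yy' t(3) unfolding tree_height_def by auto
    then obtain u where u: "u \<noteq> []" "t @ u \<in> T" "tree_rank T (t @ u) = y"
      using tree_rank_attained[OF wf t(1)] by blast
    then have "t @ u \<in> nodes y" unfolding nodes_def by simp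
    then have "(f y, g (t @ u)) \<in> W" unfolding f_def by (rule wo_rel.minim_least[OF woW sub imageI])
    moreover note g(2)[OF t(1,2) u(2,1)]
    ultimately show "(f y, f y') \<in> W \<and> f y \<noteq> f y'"
      using Well_order_le_less_trans[OF W, of "f y" "g (t @ u)" "g t"] t(4) by simp
  qed
qed

lemma tree_height_ordLeq:
  fixes T :: "'n list set" and W :: "'b rel"
  assumes wf: "wf (tree_child T)" and W: "Well_order W"
    and g: "\<And>t. t \<in> T \<Longrightarrow> t \<noteq> [] \<Longrightarrow> g t \<in> Field W"
      "\<And>t u. t \<in> T \<Longrightarrow> t \<noteq> [] \<Longrightarrow> t @ u \<in> T \<Longrightarrow> u \<noteq> [] \<Longrightarrow>
         (g (t @ u), g t) \<in> W \<and> g (t @ u) \<noteq> g t"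
    and root: "[] \<in> T"
  shows "tree_height T \<le>o W"
proof -
  obtain f where f: "\<And>y. y \<in> Field (tree_height T) \<Longrightarrow> \<exists>t\<in>T. t \<noteq> [] \<and> f y = g t"
    "\<And>y y'. (y, y') \<in> tree_height T \<Longrightarrow> y \<noteq> y' \<Longrightarrow> (f y, f y') \<in> W \<and> f y \<noteq> f y'"
    using tree_height_strict_mono_map[OF wf W g root] by blast
  show ?thesis
  proof (rule ordLeq_if_strict_mono[OF Well_order_tree_height W _ f(2)])
    show "f y \<in> Field W" if "y \<in> Field (tree_height T)" for y
      using f(1)[OF that] g(1) by auto
  qed
qed

lemma mem_Dec_iff: "xs \<in> Dec A le \<longleftrightarrow> set xs \<subseteq> A \<and> sorted_wrt (\<lambda>x y. strict le y x) xs"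
  unfolding Dec_def by (auto simp: sorted_wrt_iff_nth_less)

lemma Nil_in_Dec: "[] \<in> Dec A le"
  unfolding mem_Dec_iff by simp

lemma prefix_closed_Dec: "prefix_closed (Dec A le)"
  unfolding prefix_closed_def mem_Dec_iff by (auto simp: sorted_wrt_append)

lemma wf_tree_child_Dec:
  assumes no_desc: "\<And>a. \<forall>i::nat. a i \<in> A \<Longrightarrow> \<not> (\<forall>i j. i < j \<longrightarrow> strict le (a j) (a i))"
  shows "wf (tree_child (Dec A le))"
proof (rule ccontr)
  assume "\<not> wf (tree_child (Dec A le))"
  then obtain f where f: "\<And>i. (f (Suc i), f i) \<in> tree_child (Dec A le)"
    unfolding wf_iff_no_infinite_down_chain by blast
  define a where "a i = last (f (Suc i))" for i
  have f_Dec: "f i \<in> Dec A le" for i using tree_childD[OF f[of i]] by blast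
  have extend: "\<exists>u. f (i + k) = f i @ u \<and> length u = k" for i k
  proof (induction k)
    case (Suc k)
    then obtain u where "f (i + k) = f i @ u" "length u = k" by blast
    moreover obtain x where "f (Suc (i + k)) = f (i + k) @ [x]" using tree_childD[OF f] by blast
    ultimately show ?case by (intro exI[of _ "u @ [x]"]) simp
  qed simp
  have "strict le (a j) (a i)" if "i < j" for i j
  proof -
    obtain u where u: "f (Suc i + (j - i)) = f (Suc i) @ u" "length u = j - i" using extend by blast
    then have "f (Suc j) = f (Suc i) @ u" "u \<noteq> []" using that by auto
    moreover have "f (Suc i) \<noteq> []" using tree_childD[OF f[of i]] by auto
    ultimately have "a i \<in> set (f (Suc i))" "a j \<in> set u" unfolding a_def by auto
    then show ?thesis using f_Dec[of "Suc j"] \<open>f (Suc j) = f (Suc i) @ u\<close>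
      unfolding mem_Dec_iff by (auto simp: sorted_wrt_append)
  qed
  moreover have "a i \<in> A" for i
    using f_Dec[of "Suc i"] tree_childD[OF f[of i]] unfolding a_def mem_Dec_iff by auto
  ultimately show False using no_desc[of a] by blast
qed

lemma bigW_less_trans: "bigW_less x y \<Longrightarrow> bigW_less y z \<Longrightarrow> bigW_less x z"
  using Well_order_less_le_trans[OF Well_order_bigW] by blast

lemma bigW_less_le_trans: "bigW_less x y \<Longrightarrow> (y, z) \<in> bigW \<Longrightarrow> bigW_less x z"
  using Well_order_less_le_trans[OF Well_order_bigW] by blast

lemma bigW_less_asym: "bigW_less x y \<Longrightarrow> (y, x) \<in> bigW \<Longrightarrow> False"
  using Well_orderD(2)[OF Well_order_bigW] unfolding antisym_def by blast

lemma bigW_trichotomy: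
  "x \<in> Field bigW \<Longrightarrow> y \<in> Field bigW \<Longrightarrow> bigW_less x y \<or> x = y \<or> bigW_less y x"
  using Well_orderD(4)[OF Well_order_bigW] by blast

definition bigW_succ :: "'n list set \<Rightarrow> 'n list set" where
  "bigW_succ x = wo_rel.suc bigW {x}"

definition bigW_plus :: "'n list set \<Rightarrow> nat \<Rightarrow> 'n list set" where
  "bigW_plus b k = (bigW_succ ^^ k) b"

text \<open>Zero or a limit ordinal: every ordinal is \<open>b + k\<close> for a unique such \<open>b\<close> and \<open>k :: nat\<close>.\<close>
definition is_block_start :: "'n list set \<Rightarrow> bool" where
  "is_block_start b \<longleftrightarrow> b \<in> Field bigW \<and> (\<forall>p\<in>Field bigW. bigW_succ p \<noteq> b)"

lemma bigW_succ:
  assumes x: "x \<in> Field (bigW :: 'n list set rel)"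
  shows "bigW_less x (bigW_succ x)" "bigW_succ x \<in> Field bigW"
proof -
  have sub: "{x} \<subseteq> Field (bigW :: 'n list set rel)" using x by simp
  have "|{x}| \<le>o |UNIV :: 'n list set|"
    by (rule card_of_ordLeq[THEN iffD1]) (rule exI[of _ "\<lambda>_. []"], simp)
  then have "AboveS bigW {x} \<noteq> {}" by (rule AboveS_bigW_nonempty[OF sub])
  then show "bigW_less x (bigW_succ x)" "bigW_succ x \<in> Field bigW"
    unfolding bigW_succ_def using wo_rel.suc_greater[OF wo_rel_bigW sub] wo_rel.suc_inField[OF wo_rel_bigW sub]
    by auto
qed

lemma bigW_succ_least: "bigW_less x y \<Longrightarrow> (bigW_succ x, y) \<in> bigW"
  unfolding bigW_succ_def
  by (rule wo_rel.suc_least_AboveS[OF wo_rel_bigW]) (auto simp: AboveS_def intro: FieldI2)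

lemma bigW_plus_0 [simp]: "bigW_plus b 0 = b"
  unfolding bigW_plus_def by simp

lemma bigW_plus_Suc: "bigW_plus b (Suc k) = bigW_succ (bigW_plus b k)"
  unfolding bigW_plus_def by simp

lemma bigW_plus_in_Field: "b \<in> Field bigW \<Longrightarrow> bigW_plus b k \<in> Field bigW"
  by (induction k) (auto simp: bigW_plus_Suc bigW_succ)

lemma bigW_plus_strict_mono: "b \<in> Field bigW \<Longrightarrow> k < k' \<Longrightarrow> bigW_less (bigW_plus b k) (bigW_plus b k')"
proof (induction k')
  case (Suc k')
  have "bigW_less (bigW_plus b k') (bigW_plus b (Suc k'))"
    unfolding bigW_plus_Suc using bigW_succ bigW_plus_in_Field Suc(2) by blast
  then show ?case using Suc bigW_less_trans by (cases "k = k'") auto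
qed simp

lemma bigW_plus_mono: "b \<in> Field bigW \<Longrightarrow> k \<le> k' \<Longrightarrow> (bigW_plus b k, bigW_plus b k') \<in> bigW"
  using bigW_plus_strict_mono[of b k k'] Well_orderD(3)[OF Well_order_bigW] bigW_plus_in_Field
  by (cases "k = k'") auto

lemma exists_block_start:
  assumes "x \<in> Field bigW"
  shows "\<exists>b k. is_block_start b \<and> x = bigW_plus b k"
  using Well_orderD(5)[OF Well_order_bigW] assms
proof (induction x rule: wf_induct_rule)
  case (less x)
  show ?case
  proof (cases "is_block_start x")
    case True
    then show ?thesis by (intro exI[of _ x] exI[of _ 0]) simp
  next
    case False
    then obtain p where p: "p \<in> Field bigW" "bigW_succ p = x" using less(2) unfolding is_block_start_def by blast
    then have "(p, x) \<in> bigW - Id" using bigW_succ(1)[OF p(1)] by simp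
    then obtain b k where "is_block_start b" "p = bigW_plus b k" using less(1) p(1) by blast
    then show ?thesis using p(2) by (intro exI[of _ b] exI[of _ "Suc k"]) (simp add: bigW_plus_Suc)
  qed
qed

lemma bigW_plus_below_block_start:
  assumes b': "is_block_start b'" and bb': "bigW_less b b'"
  shows "bigW_less (bigW_plus b k) b'"
proof (induction k)
  case (Suc k)
  have "bigW_plus b k \<in> Field bigW" using Suc by (blast intro: FieldI1)
  then have "bigW_succ (bigW_plus b k) \<noteq> b'" using b' unfolding is_block_start_def by blast
  then show ?case using bigW_succ_least[OF Suc] by (simp add: bigW_plus_Suc)
qed (simp add: bb')

lemma bigW_plus_less_if_block_start_less:
  assumes "is_block_start b" "is_block_start b'" "bigW_less b b'"
  shows "bigW_less (bigW_plus b k) (bigW_plus b' k')"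
proof -
  have "(b', bigW_plus b' k') \<in> bigW"
    using bigW_plus_mono[of b' 0 k'] assms(2) unfolding is_block_start_def by simp
  then show ?thesis by (rule bigW_less_le_trans[OF bigW_plus_below_block_start[OF assms(2,3)]])
qed

lemma bigW_plus_inject:
  assumes "is_block_start b" "is_block_start b'" "bigW_plus b k = bigW_plus b' k'"
  shows "b = b' \<and> k = k'"
proof -
  have F: "b \<in> Field bigW" "b' \<in> Field bigW" using assms unfolding is_block_start_def by auto
  have "b = b'"
  proof (rule ccontr)
    assume "b \<noteq> b'"
    then have "bigW_less b b' \<or> bigW_less b' b" using bigW_trichotomy[OF F] by blast
    then show False using bigW_plus_less_if_block_start_less[OF assms(1,2)]
        bigW_plus_less_if_block_start_less[OF assms(2,1)] assms(3) by fastforce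
  qed
  moreover have "k = k'"
  proof (rule ccontr)
    assume "k \<noteq> k'"
    then have "k < k' \<or> k' < k" by arith
    then show False using bigW_plus_strict_mono[OF F(1)] assms(3) \<open>b = b'\<close> by fastforce
  qed
  ultimately show ?thesis by simp
qed

definition block_start :: "'n list set \<Rightarrow> 'n list set" where
  "block_start x = (SOME b. is_block_start b \<and> (\<exists>k. x = bigW_plus b k))"

definition block_offset :: "'n list set \<Rightarrow> nat" where
  "block_offset x = (SOME k. x = bigW_plus (block_start x) k)"

lemma block_decomposition:
  assumes "x \<in> Field bigW"
  shows "is_block_start (block_start x)" "x = bigW_plus (block_start x) (block_offset x)"
proof -
  have "is_block_start (block_start x) \<and> (\<exists>k. x = bigW_plus (block_start x) k)"
    unfolding block_start_def by (rule someI_ex) (use exists_block_start[OF assms] in blast)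
  then show "is_block_start (block_start x)" "x = bigW_plus (block_start x) (block_offset x)"
    unfolding block_offset_def by (blast, elim conjE someI_ex)
qed

lemma block_start_in_Field: "x \<in> Field bigW \<Longrightarrow> block_start x \<in> Field bigW"
  using block_decomposition(1) unfolding is_block_start_def by blast

lemma block_decomposition_bigW_plus:
  assumes "is_block_start b"
  shows "block_start (bigW_plus b k) = b" "block_offset (bigW_plus b k) = k"
proof -
  have "bigW_plus b k \<in> Field bigW" using bigW_plus_in_Field assms unfolding is_block_start_def by blast
  then show "block_start (bigW_plus b k) = b" "block_offset (bigW_plus b k) = k"
    using bigW_plus_inject[OF block_decomposition(1) assms block_decomposition(2)[symmetric]] by auto
qed

lemma block_start_le:
  assumes "x \<in> Field bigW"
  shows "(block_start x, x) \<in> bigW"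
  using bigW_plus_mono[OF block_start_in_Field[OF assms], of 0 "block_offset x"]
    block_decomposition(2)[OF assms] by simp

lemma bigW_less_block_cases:
  assumes x: "x \<in> Field bigW" and y: "y \<in> Field bigW" and xy: "bigW_less x y"
  shows "bigW_less (block_start x) (block_start y) \<or>
    (block_start x = block_start y \<and> block_offset x < block_offset y)"
proof -
  note x_eq = block_decomposition[OF x] and y_eq = block_decomposition[OF y]
  show ?thesis
  proof (cases "block_start x = block_start y")
    case True
    have "\<not> block_offset y \<le> block_offset x"
    proof
      assume "block_offset y \<le> block_offset x"
      then have "(y, x) \<in> bigW"
        using bigW_plus_mono[OF block_start_in_Field[OF x]] x_eq(2) y_eq(2) True by metis
      then show False using bigW_less_asym[OF xy] by blast
    qed
    then show ?thesis using True by simp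
  next
    case False
    have "\<not> bigW_less (block_start y) (block_start x)"
    proof
      assume "bigW_less (block_start y) (block_start x)"
      then have "bigW_less y x"
        using bigW_plus_less_if_block_start_less[OF y_eq(1) x_eq(1)] x_eq(2) y_eq(2) by metis
      then show False using bigW_less_asym[OF xy] by blast
    qed
    then show ?thesis
      using False bigW_trichotomy[OF block_start_in_Field[OF x] block_start_in_Field[OF y]] by blast
  qed
qed

lemma sum_digits_less_power:
  fixes d :: "nat \<Rightarrow> nat"
  assumes "\<forall>k<K. d k < M"
  shows "(\<Sum>k<K. d k * M ^ k) < M ^ K"
  using assms
proof (induction K)
  case (Suc K)
  then have "(\<Sum>k<K. d k * M ^ k) < M ^ K" "Suc (d K) \<le> M" by auto
  moreover have "Suc (d K) * M ^ K \<le> M * M ^ K" using \<open>Suc (d K) \<le> M\<close> by (rule mult_le_mono1)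
  ultimately show ?case by simp
qed simp

lemma sum_digits_less:
  fixes d d' :: "nat \<Rightarrow> nat"
  assumes "\<forall>k<K. d k < M" "\<forall>k<K. d' k < M" "n < K" "d' n < d n"
    "\<forall>k. n < k \<longrightarrow> k < K \<longrightarrow> d' k = d k"
  shows "(\<Sum>k<K. d' k * M ^ k) < (\<Sum>k<K. d k * M ^ k)"
  using assms
proof (induction K)
  case (Suc K)
  show ?case
  proof (cases "n = K")
    case True
    have "(\<Sum>k<K. d' k * M ^ k) < M ^ K" using sum_digits_less_power[of K d' M] Suc.prems by simp
    moreover have "Suc (d' K) * M ^ K \<le> d K * M ^ K" using Suc.prems True by (intro mult_le_mono1) simp
    ultimately have "(\<Sum>k<Suc K. d' k * M ^ k) < d K * M ^ K" by simp
    also have "\<dots> \<le> (\<Sum>k<Suc K. d k * M ^ k)" by simp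
    finally show ?thesis .
  next
    case False
    then show ?thesis using Suc by simp
  qed
qed simp

locale wqo =
  fixes A :: "'a set" and le :: "'a \<Rightarrow> 'a \<Rightarrow> bool"
  assumes wqo_on_A: "wqo_on A le"
begin

lemma qo_refl: "x \<in> A \<Longrightarrow> le x x"
  using wqo_on_A unfolding wqo_on_def qo_on_def by simp

lemma qo_trans: "x \<in> A \<Longrightarrow> y \<in> A \<Longrightarrow> z \<in> A \<Longrightarrow> le x y \<Longrightarrow> le y z \<Longrightarrow> le x z"
  using wqo_on_A unfolding wqo_on_def qo_on_def by meson

lemma good:
  fixes f :: "nat \<Rightarrow> 'a"
  assumes "\<And>i. f i \<in> A"
  shows "\<exists>i j. i < j \<and> le (f i) (f j)"
proof -
  have "\<forall>f :: nat \<Rightarrow> 'a. (\<forall>i. f i \<in> A) \<longrightarrow> (\<exists>i j. i < j \<and> le (f i) (f j))"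
    using wqo_on_A unfolding wqo_on_def by (rule conjunct2)
  then show ?thesis using assms by blast
qed

lemma strict_le_trans: "x \<in> A \<Longrightarrow> y \<in> A \<Longrightarrow> z \<in> A \<Longrightarrow> strict le x y \<Longrightarrow> le y z \<Longrightarrow> strict le x z"
  unfolding strict_def using qo_trans by blast

lemma wf_tree_child_Dec_A: "wf (tree_child (Dec A le))"
proof (rule wf_tree_child_Dec)
  fix a :: "nat \<Rightarrow> 'a" assume "\<forall>i. a i \<in> A"
  then show "\<not> (\<forall>i j. i < j \<longrightarrow> strict le (a j) (a i))"
    using good[of a] unfolding strict_def by blast
qed

definition elem_height :: "'a \<Rightarrow> 'a list set" where
  "elem_height a = tree_rank (Dec A le) [a]"

definition height_set :: "'a list set set" where
  "height_set = underS bigW (tree_rank (Dec A le) [])"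

lemma height_eq_Restr: "height A le = Restr bigW height_set"
  unfolding height_def tree_height_def height_set_def ..

lemma Field_height: "Field (height A le) = height_set"
  unfolding height_def height_set_def by (rule Field_tree_height)

lemma Well_order_height: "Well_order (height A le)"
  unfolding height_def by (rule Well_order_tree_height)

lemma height_set_subset_Field: "height_set \<subseteq> Field bigW"
  unfolding height_set_def underS_def by (auto intro: FieldI1)

lemma height_set_downward_closed: "y \<in> height_set \<Longrightarrow> (z, y) \<in> bigW \<Longrightarrow> z \<in> height_set"
  unfolding height_set_def underS_def using Well_order_le_less_trans[OF Well_order_bigW] by blast

lemma elem_height_in_Field: "elem_height a \<in> Field bigW"
  unfolding elem_height_def by (rule tree_rank_in_Field[OF wf_tree_child_Dec_A])

lemma Dec_snoc_append_iff:
  assumes "s @ [a] \<in> Dec A le"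
  shows "(s @ [a]) @ w \<in> Dec A le \<longleftrightarrow> [a] @ w \<in> Dec A le"
proof
  assume aw: "[a] @ w \<in> Dec A le"
  have s: "set s \<subseteq> A" "a \<in> A" "\<forall>x\<in>set s. strict le a x"
    using assms unfolding mem_Dec_iff by (auto simp: sorted_wrt_append)
  have w: "set w \<subseteq> A" "\<forall>y\<in>set w. strict le y a" using aw unfolding mem_Dec_iff by auto
  have "\<forall>x\<in>set s. \<forall>y\<in>set w. strict le y x"
    using s w strict_le_trans[of _ a] unfolding strict_def by blast
  then show "(s @ [a]) @ w \<in> Dec A le"
    using assms aw unfolding mem_Dec_iff by (auto simp: sorted_wrt_append)
qed (auto simp: mem_Dec_iff sorted_wrt_append)

lemma tree_rank_Dec_snoc: "s @ [a] \<in> Dec A le \<Longrightarrow> tree_rank (Dec A le) (s @ [a]) = elem_height a"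
  unfolding elem_height_def by (rule tree_rank_cong[OF wf_tree_child_Dec_A]) (use Dec_snoc_append_iff in blast)

lemma elem_height_eq:
  assumes "a \<in> A" "b \<in> A" "le a b" "le b a"
  shows "elem_height a = elem_height b"
  unfolding elem_height_def
proof (rule tree_rank_cong[OF wf_tree_child_Dec_A], intro allI)
  fix w
  have "strict le y a \<longleftrightarrow> strict le y b" if "y \<in> A" for y
    using assms that qo_trans unfolding strict_def by blast
  then show "[a] @ w \<in> Dec A le \<longleftrightarrow> [b] @ w \<in> Dec A le" using assms unfolding mem_Dec_iff by auto
qed

lemma elem_height_strict_mono:
  assumes "a \<in> A" "b \<in> A" "strict le a b"
  shows "bigW_less (elem_height a) (elem_height b)"
proof -
  have "[b] @ [a] \<in> Dec A le" "[b] \<in> Dec A le" using assms unfolding mem_Dec_iff by auto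
  then have "bigW_less (tree_rank (Dec A le) ([b] @ [a])) (tree_rank (Dec A le) [b])"
    using tree_rank_child_less[OF wf_tree_child_Dec_A snoc_in_tree_children] by blast
  then show ?thesis using tree_rank_Dec_snoc[OF \<open>[b] @ [a] \<in> Dec A le\<close>] unfolding elem_height_def by simp
qed

lemma elem_height_in_height_set: "a \<in> A \<Longrightarrow> elem_height a \<in> height_set"
  using tree_rank_child_less[OF wf_tree_child_Dec_A snoc_in_tree_children[of "[]"]]
  unfolding height_set_def elem_height_def underS_def mem_Dec_iff by auto

definition eq_class :: "'a \<Rightarrow> 'a set" where
  "eq_class y = {x \<in> A. le x y \<and> le y x}"

definition maximal_in :: "'a set \<Rightarrow> 'a \<Rightarrow> bool" where
  "maximal_in S y \<longleftrightarrow> y \<in> S \<and> (\<forall>z\<in>S. \<not> strict le y z)"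

text \<open>A finite set is determined up to Hoare equivalence by its maximal classes.\<close>
definition max_classes :: "'a set \<Rightarrow> 'a list set \<Rightarrow> 'a set set" where
  "max_classes S \<beta> = eq_class ` {y. maximal_in S y \<and> elem_height y = \<beta>}"

definition max_count :: "'a set \<Rightarrow> 'a list set \<Rightarrow> nat" where
  "max_count S \<beta> = card (max_classes S \<beta>)"

definition level_width :: "'a list set \<Rightarrow> nat" where
  "level_width \<beta> = card (eq_class ` {a \<in> A. elem_height a = \<beta>})"

lemma eq_class_eq_iff:
  assumes "x \<in> A" "y \<in> A"
  shows "eq_class x = eq_class y \<longleftrightarrow> le x y \<and> le y x"
proof
  assume "eq_class x = eq_class y"
  moreover have "x \<in> eq_class x" using assms qo_refl unfolding eq_class_def by auto
  ultimately show "le x y \<and> le y x" unfolding eq_class_def by auto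
next
  assume "le x y \<and> le y x"
  then show "eq_class x = eq_class y" unfolding eq_class_def using assms qo_trans by blast
qed

lemma maximal_in_subset: "S \<subseteq> A \<Longrightarrow> maximal_in S y \<Longrightarrow> y \<in> A"
  unfolding maximal_in_def by auto

text \<open>Take an element above \<open>x\<close> of largest height.\<close>
lemma exists_maximal_above:
  assumes S: "finite S" "S \<subseteq> A" and x: "x \<in> S"
  obtains y where "maximal_in S y" "le x y"
proof -
  let ?U = "{z \<in> S. le x z}"
  have "finite (elem_height ` ?U)" using S(1) by simp
  moreover have "elem_height ` ?U \<noteq> {}" using S x qo_refl by auto
  moreover have "elem_height ` ?U \<subseteq> Field bigW" using elem_height_in_Field by blast
  ultimately obtain h where h: "h \<in> elem_height ` ?U" "\<And>g. g \<in> elem_height ` ?U \<Longrightarrow> (g, h) \<in> bigW"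
    by (rule Well_order_finite_has_max[OF Well_order_bigW]) blast
  then obtain y where y: "y \<in> ?U" "\<And>z. z \<in> ?U \<Longrightarrow> (elem_height z, elem_height y) \<in> bigW"
    by blast
  have "\<not> strict le y z" if z: "z \<in> S" for z
  proof
    assume yz: "strict le y z"
    have xyz: "x \<in> A" "y \<in> A" "z \<in> A" using x y z S by auto
    then have "le x z" using qo_trans[OF xyz] y yz unfolding strict_def by blast
    then have "(elem_height z, elem_height y) \<in> bigW" using y(2) z by blast
    moreover have "bigW_less (elem_height y) (elem_height z)"
      using elem_height_strict_mono[OF xyz(2,3) yz] .
    ultimately show False using Well_orderD(2)[OF Well_order_bigW] unfolding antisym_def by blast
  qed
  then show thesis using that y unfolding maximal_in_def by blast
qed

lemma max_classes_empty: "\<beta> \<notin> elem_height ` S \<Longrightarrow> max_classes S \<beta> = {}"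
  unfolding max_classes_def maximal_in_def by auto

lemma finite_max_classes: "finite S \<Longrightarrow> finite (max_classes S \<beta>)"
  unfolding max_classes_def maximal_in_def by auto

lemma hoare_if_max_classes_subset:
  assumes S: "finite S" "S \<subseteq> A" and S': "S' \<subseteq> A"
    and sub: "\<And>\<beta>. max_classes S \<beta> \<subseteq> max_classes S' \<beta>"
  shows "hoare le S S'"
  unfolding hoare_def
proof
  fix x assume x: "x \<in> S"
  then obtain y where y: "maximal_in S y" "le x y" using exists_maximal_above[OF S] by blast
  then have "eq_class y \<in> max_classes S' (elem_height y)"
    using sub unfolding max_classes_def by blast
  then obtain y' where y': "maximal_in S' y'" "eq_class y = eq_class y'"
    unfolding max_classes_def by auto
  have "y \<in> A" "y' \<in> A" using y y' S S' maximal_in_subset by auto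
  then have "le x y'" using y y' x S eq_class_eq_iff qo_trans[of x y y'] by blast
  then show "\<exists>b\<in>S'. le x b" using y' unfolding maximal_in_def by auto
qed

text \<open>A maximal element of \<open>S'\<close> at height \<open>\<beta>\<close> lies below a maximal \<open>y\<close> of \<open>S\<close>; if strictly
  below, then \<open>y\<close> is higher, hence equivalent to a maximal element of \<open>S'\<close>.\<close>
lemma max_classes_subset_at_top:
  assumes S: "finite S" "S \<subseteq> A" and S': "S' \<subseteq> A" and H: "hoare le S' S"
    and above: "\<And>\<gamma>. bigW_less \<beta> \<gamma> \<Longrightarrow> max_classes S' \<gamma> = max_classes S \<gamma>"
  shows "max_classes S' \<beta> \<subseteq> max_classes S \<beta>"
proof
  fix k assume "k \<in> max_classes S' \<beta>"
  then obtain y' where y': "maximal_in S' y'" "elem_height y' = \<beta>" "k = eq_class y'"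
    unfolding max_classes_def by auto
  have y'A: "y' \<in> A" using y' S' maximal_in_subset by auto
  obtain z where z: "z \<in> S" "le y' z" using H y' unfolding hoare_def maximal_in_def by auto
  obtain y where y: "maximal_in S y" "le z y" using exists_maximal_above[OF S z(1)] by blast
  have yA: "y \<in> A" "z \<in> A" using y z S maximal_in_subset by auto
  have y'y: "le y' y" using qo_trans[OF y'A yA(2) yA(1) z(2) y(2)] .
  show "k \<in> max_classes S \<beta>"
  proof (cases "le y y'")
    case True
    then have "eq_class y' = eq_class y" "elem_height y = \<beta>"
      using eq_class_eq_iff[OF y'A yA(1)] elem_height_eq[OF y'A yA(1)] y'y y'(2) by auto
    then show ?thesis using y y'(3) unfolding max_classes_def by auto
  next
    case False
    then have st: "strict le y' y" using y'y unfolding strict_def by simp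
    then have "bigW_less \<beta> (elem_height y)" using elem_height_strict_mono y'A yA y' by auto
    then have "eq_class y \<in> max_classes S' (elem_height y)"
      using above y unfolding max_classes_def by auto
    then obtain y'' where y'': "maximal_in S' y''" "eq_class y = eq_class y''"
      unfolding max_classes_def by auto
    then have "y'' \<in> A" using S' maximal_in_subset by auto
    then have "strict le y' y''" using strict_le_trans[OF y'A yA(1) _ st] eq_class_eq_iff yA(1) y''(2) by blast
    then show ?thesis using y' y'' unfolding maximal_in_def by auto
  qed
qed

lemma max_classes_psubset_at_top:
  assumes S: "finite S" "S \<subseteq> A" and S': "finite S'" "S' \<subseteq> A"
    and H: "hoare le S' S" "\<not> hoare le S S'"
  obtains \<beta> where "\<beta> \<in> height_set" "max_classes S' \<beta> \<subset> max_classes S \<beta>"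
    "\<And>\<gamma>. bigW_less \<beta> \<gamma> \<Longrightarrow> max_classes S' \<gamma> = max_classes S \<gamma>"
proof -
  let ?D = "{\<beta>. max_classes S' \<beta> \<noteq> max_classes S \<beta>}"
  have D: "?D \<subseteq> elem_height ` (S \<union> S')"
  proof
    fix \<beta> assume "\<beta> \<in> ?D"
    then show "\<beta> \<in> elem_height ` (S \<union> S')"
      using max_classes_empty[of \<beta> S] max_classes_empty[of \<beta> S'] by auto
  qed
  have "finite ?D" using D S(1) S'(1) finite_subset by blast
  moreover have "?D \<noteq> {}"
  proof
    assume "?D = {}"
    then have "max_classes S \<beta> \<subseteq> max_classes S' \<beta>" for \<beta> by auto
    then show False using hoare_if_max_classes_subset[OF S S'(2)] H(2) by blast
  qed
  moreover have "?D \<subseteq> Field bigW" using D elem_height_in_Field by blast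
  ultimately obtain \<beta> where \<beta>: "\<beta> \<in> ?D" "\<And>\<gamma>. \<gamma> \<in> ?D \<Longrightarrow> (\<gamma>, \<beta>) \<in> bigW"
    by (rule Well_order_finite_has_max[OF Well_order_bigW]) blast
  have above: "max_classes S' \<gamma> = max_classes S \<gamma>" if "bigW_less \<beta> \<gamma>" for \<gamma>
  proof (rule ccontr)
    assume "max_classes S' \<gamma> \<noteq> max_classes S \<gamma>"
    then have "(\<gamma>, \<beta>) \<in> bigW" using \<beta>(2) by blast
    then show False using that Well_orderD(2)[OF Well_order_bigW] unfolding antisym_def by blast
  qed
  have "max_classes S' \<beta> \<subseteq> max_classes S \<beta>"
    by (rule max_classes_subset_at_top[OF S S'(2) H(1) above])
  then have "max_classes S' \<beta> \<subset> max_classes S \<beta>" using \<beta>(1) by blast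
  moreover obtain a where "a \<in> S \<union> S'" "\<beta> = elem_height a" using \<beta>(1) D by blast
  then have "\<beta> \<in> height_set" using S(2) S'(2) elem_height_in_height_set by blast
  ultimately show thesis using that above by blast
qed

text \<open>Elements of equal height are never strictly comparable, so by the wqo property they fall
  into finitely many classes.\<close>
lemma finite_level_classes: "finite (eq_class ` {a \<in> A. elem_height a = \<beta>})"
proof (rule ccontr)
  assume "infinite (eq_class ` {a \<in> A. elem_height a = \<beta>})"
  then have "\<exists>k :: nat \<Rightarrow> 'a set. inj k \<and> range k \<subseteq> eq_class ` {a \<in> A. elem_height a = \<beta>}"
    by (rule infinite_iff_countable_subset[THEN iffD1])
  then obtain k :: "nat \<Rightarrow> 'a set" where k: "inj k" "range k \<subseteq> eq_class ` {a \<in> A. elem_height a = \<beta>}"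
    by blast
  have "\<exists>a. a \<in> A \<and> elem_height a = \<beta> \<and> eq_class a = k i" for i
  proof -
    have "k i \<in> eq_class ` {a \<in> A. elem_height a = \<beta>}" using k(2) by (rule range_subsetD)
    then show ?thesis by auto
  qed
  then have "\<exists>a. \<forall>i. a i \<in> A \<and> elem_height (a i) = \<beta> \<and> eq_class (a i) = k i"
    by (intro choice allI)
  then obtain a where "\<forall>i. a i \<in> A \<and> elem_height (a i) = \<beta> \<and> eq_class (a i) = k i"
    by blast
  then have a: "\<And>i. a i \<in> A" "\<And>i. elem_height (a i) = \<beta>" "\<And>i. eq_class (a i) = k i" by auto
  obtain i j where ij: "i < j" "le (a i) (a j)" using good[of a] a by blast
  show False
  proof (cases "le (a j) (a i)")
    case True
    then have "k i = k j" using eq_class_eq_iff[OF a(1) a(1), of i j] ij a(3) by simp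
    then show False using k(1) ij unfolding inj_def by auto
  next
    case False
    then have "strict le (a i) (a j)" using ij unfolding strict_def by simp
    then show False using elem_height_strict_mono[OF a(1) a(1)] a(2) by simp
  qed
qed

lemma max_count_le_level_width: "S \<subseteq> A \<Longrightarrow> max_count S \<beta> \<le> level_width \<beta>"
  unfolding max_count_def level_width_def max_classes_def maximal_in_def
  by (rule card_mono[OF finite_level_classes]) auto

lemma max_count_less_at_top:
  assumes S: "finite S" "S \<subseteq> A" and S': "finite S'" "S' \<subseteq> A"
    and H: "hoare le S' S" "\<not> hoare le S S'"
  obtains \<beta> where "\<beta> \<in> height_set" "max_count S' \<beta> < max_count S \<beta>"
    "\<And>\<gamma>. bigW_less \<beta> \<gamma> \<Longrightarrow> max_count S' \<gamma> = max_count S \<gamma>"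
proof -
  obtain \<beta> where \<beta>: "\<beta> \<in> height_set" "max_classes S' \<beta> \<subset> max_classes S \<beta>"
    "\<And>\<gamma>. bigW_less \<beta> \<gamma> \<Longrightarrow> max_classes S' \<gamma> = max_classes S \<gamma>"
    using max_classes_psubset_at_top[OF S S' H] by blast
  show thesis
  proof (rule that[OF \<beta>(1)])
    show "max_count S' \<beta> < max_count S \<beta>"
      unfolding max_count_def using psubset_card_mono[OF finite_max_classes[OF S(1)] \<beta>(2)] .
    show "\<And>\<gamma>. bigW_less \<beta> \<gamma> \<Longrightarrow> max_count S' \<gamma> = max_count S \<gamma>"
      unfolding max_count_def using \<beta>(3) by simp
  qed
qed

text \<open>A block \<open>b, b + 1, \<dots>\<close> lying entirely below the height is \<^emph>\<open>full\<close>; each of its levels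
  \<open>b + k\<close> then gets \<open>level_width (b + k)\<close> consecutive slots in the same block, and a set
  \<open>S\<close> is coded by filling the first \<open>max_count S (b + k)\<close> of them.\<close>
definition full_block :: "'a list set \<Rightarrow> bool" where
  "full_block x \<longleftrightarrow> (\<forall>k. bigW_plus (block_start x) k \<in> height_set)"

definition slot_start :: "'a list set \<Rightarrow> nat \<Rightarrow> nat" where
  "slot_start b n = (\<Sum>k<n. level_width (bigW_plus b k))"

definition slot :: "'a list set \<Rightarrow> nat \<Rightarrow> 'a list set" where
  "slot x i = bigW_plus (block_start x) (slot_start (block_start x) (block_offset x) + i)"

definition slot_code :: "'a set \<Rightarrow> 'a list set set" where
  "slot_code S = {slot x i | x i. x \<in> height_set \<and> full_block x \<and> i < max_count S x}"

lemma height_set_block_decomposition: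
  assumes "x \<in> height_set"
  shows "is_block_start (block_start x)" "x = bigW_plus (block_start x) (block_offset x)"
    "block_start x \<in> Field bigW"
  using block_decomposition block_start_in_Field assms height_set_subset_Field by blast+

lemma slot_in_height_set: "full_block x \<Longrightarrow> slot x i \<in> height_set"
  unfolding slot_def full_block_def by blast

lemma slot_strict_mono: "x \<in> height_set \<Longrightarrow> i < i' \<Longrightarrow> bigW_less (slot x i) (slot x i')"
  unfolding slot_def by (rule bigW_plus_strict_mono[OF height_set_block_decomposition(3)]) simp_all

lemma slot_mono: "x \<in> height_set \<Longrightarrow> i \<le> i' \<Longrightarrow> (slot x i, slot x i') \<in> bigW"
  unfolding slot_def by (rule bigW_plus_mono[OF height_set_block_decomposition(3)]) simp_all

lemma slot_less_if_less:
  assumes x: "x \<in> height_set" and x': "x' \<in> height_set" and xx': "bigW_less x x'"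
    and i: "i < level_width x"
  shows "bigW_less (slot x i) (slot x' i')"
  using bigW_less_block_cases[OF subsetD[OF height_set_subset_Field x] subsetD[OF height_set_subset_Field x'] xx']
proof
  assume "bigW_less (block_start x) (block_start x')"
  then show ?thesis unfolding slot_def
    using bigW_plus_less_if_block_start_less height_set_block_decomposition(1) x x' by blast
next
  assume same: "block_start x = block_start x' \<and> block_offset x < block_offset x'"
  let ?b = "block_start x"
  have "level_width (bigW_plus ?b (block_offset x)) = level_width x"
    using height_set_block_decomposition(2)[OF x] by simp
  then have "slot_start ?b (block_offset x) + i < slot_start ?b (Suc (block_offset x))"
    unfolding slot_start_def using i by simp
  also have "\<dots> \<le> slot_start ?b (block_offset x')"
    unfolding slot_start_def using same by (intro sum_mono2) auto
  finally show ?thesis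
    unfolding slot_def using bigW_plus_strict_mono[OF height_set_block_decomposition(3)[OF x]] same
    by simp
qed

lemma slot_inject:
  assumes x: "x \<in> height_set" "i < level_width x" and x': "x' \<in> height_set" "i' < level_width x'"
    and eq: "slot x i = slot x' i'"
  shows "x = x' \<and> i = i'"
proof -
  have "x = x'"
    using bigW_trichotomy[OF subsetD[OF height_set_subset_Field x(1)] subsetD[OF height_set_subset_Field x'(1)]]
      slot_less_if_less[OF x(1) x'(1) _ x(2), of i'] slot_less_if_less[OF x'(1) x(1) _ x'(2), of i] eq
    by auto
  moreover have "i = i'"
    using slot_strict_mono[OF x(1), of i i'] slot_strict_mono[OF x(1), of i' i] eq \<open>x = x'\<close>
    by (cases i i' rule: linorder_cases) auto
  ultimately show ?thesis ..
qed

lemma mem_slot_code_iff: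
  assumes "S \<subseteq> A" and x: "x \<in> height_set" "full_block x" "i < level_width x"
  shows "slot x i \<in> slot_code S \<longleftrightarrow> i < max_count S x"
proof
  assume "slot x i \<in> slot_code S"
  then obtain x' i' where "slot x i = slot x' i'" "x' \<in> height_set" "i' < max_count S x'"
    unfolding slot_code_def by blast
  moreover have "i' < level_width x'" using calculation(3) max_count_le_level_width[OF assms(1)]
    by (rule less_le_trans)
  ultimately show "i < max_count S x" using slot_inject[OF x(1,3)] by blast
qed (use x in \<open>auto simp: slot_code_def\<close>)

lemma finite_slot_code:
  assumes "finite S"
  shows "finite (slot_code S)"
proof -
  have "slot_code S \<subseteq> (\<lambda>(x, i). slot x i) ` (SIGMA x: elem_height ` S. {..<max_count S x})"
  proof
    fix z assume "z \<in> slot_code S"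
    then obtain x i where z: "z = slot x i" "i < max_count S x" unfolding slot_code_def by blast
    then have "x \<in> elem_height ` S"
      using max_classes_empty[of x S] unfolding max_count_def by (metis card.empty not_less_zero)
    then show "z \<in> (\<lambda>(x, i). slot x i) ` (SIGMA x: elem_height ` S. {..<max_count S x})"
      using z by force
  qed
  moreover have "finite (SIGMA x: elem_height ` S. {..<max_count S x})"
    using assms by (intro finite_SigmaI) auto
  ultimately show ?thesis using finite_subset by blast
qed

lemma slot_code_subset: "slot_code S \<subseteq> height_set"
  unfolding slot_code_def using slot_in_height_set by blast

lemma slot_code_in_Field: "finite S \<Longrightarrow> slot_code S \<in> Field (two_pow (height A le))"
  unfolding Field_two_pow Field_height using finite_slot_code slot_code_subset by blast

text \<open>The largest slot of \<open>S\<close> at level \<open>\<beta>\<close> is the largest element of the symmetric difference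
  of the codes.\<close>
lemma slot_code_less:
  assumes S: "finite S" "S \<subseteq> A" and S': "finite S'" "S' \<subseteq> A"
    and \<beta>: "\<beta> \<in> height_set" "full_block \<beta>" "max_count S' \<beta> < max_count S \<beta>"
      "\<And>\<gamma>. bigW_less \<beta> \<gamma> \<Longrightarrow> max_count S' \<gamma> = max_count S \<gamma>"
  shows "(slot_code S', slot_code S) \<in> two_pow (height A le) \<and> slot_code S' \<noteq> slot_code S"
proof -
  define c where "c = max_count S \<beta>"
  define top where "top = slot \<beta> (c - 1)"
  have c: "c - 1 < c" "c - 1 < level_width \<beta>" "max_count S' \<beta> \<le> c - 1"
    using \<beta>(3) max_count_le_level_width[OF S(2), of \<beta>] unfolding c_def by auto
  have top: "top \<in> slot_code S" "top \<notin> slot_code S'"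
    using mem_slot_code_iff[OF _ \<beta>(1,2) c(2)] S(2) S'(2) c unfolding top_def c_def by auto
  have below_top: "(z, top) \<in> bigW" if z: "z \<in> (slot_code S' - slot_code S) \<union> (slot_code S - slot_code S')" for z
  proof -
    obtain \<gamma> i where g: "z = slot \<gamma> i" "\<gamma> \<in> height_set" "full_block \<gamma>" "i < max_count S' \<gamma> \<or> i < max_count S \<gamma>"
      using z unfolding slot_code_def by blast
    have i: "i < level_width \<gamma>" using g(4) max_count_le_level_width S(2) S'(2) by (meson less_le_trans)
    have differ: "i < max_count S' \<gamma> \<longleftrightarrow> \<not> i < max_count S \<gamma>"
      using z mem_slot_code_iff[OF _ g(2,3) i] S(2) S'(2) g(1) by blast
    consider "\<gamma> = \<beta>" | "bigW_less \<gamma> \<beta>" | "bigW_less \<beta> \<gamma>"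
      using bigW_trichotomy g(2) \<beta>(1) height_set_subset_Field by blast
    then show ?thesis
    proof cases
      case 1
      then have "i \<le> c - 1" using differ g(4) \<beta>(3) unfolding c_def by auto
      then show ?thesis using slot_mono[OF \<beta>(1)] g(1) 1 unfolding top_def by simp
    next
      case 2
      then show ?thesis using slot_less_if_less[OF g(2) \<beta>(1) _ i] g(1) unfolding top_def by simp
    next
      case 3
      then show ?thesis using \<beta>(4) differ by simp
    qed
  qed
  have "(slot_code S', slot_code S) \<in> two_pow (height A le)"
    unfolding two_pow_def Field_height
  proof (intro CollectI case_prodI conjI disjI2 bexI[of _ top] ballI)
    show "finite (slot_code S')" "finite (slot_code S)" using finite_slot_code S S' by auto
    show "slot_code S' \<subseteq> height_set" "slot_code S \<subseteq> height_set" using slot_code_subset by auto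
    show "top \<in> slot_code S - slot_code S'" using top by blast
    show "(y, top) \<in> height A le" if "y \<in> (slot_code S' - slot_code S) \<union> (slot_code S - slot_code S')" for y
      using below_top[OF that] that top slot_code_subset unfolding height_eq_Restr by blast
  qed
  then show ?thesis using top by auto
qed

text \<open>Only the last block can fail to be full; it is then finite, namely
  \<open>tail_start, \<dots>, tail_start + (tail_length - 1)\<close>, and its counts are coded as a number in base
  \<open>digit_base\<close>.\<close>
definition tail :: "'a list set set" where
  "tail = {x \<in> height_set. \<not> full_block x}"

lemma full_block_if_below_block_start:
  assumes b: "is_block_start b" "is_block_start b'" "bigW_less b b'"
    and y: "y \<in> height_set" "(b', y) \<in> bigW"
  shows "bigW_plus b k \<in> height_set"
  using bigW_less_le_trans[OF bigW_plus_below_block_start[OF b(2,3)] y(2)] y(1)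
    height_set_downward_closed by blast

lemma full_block_less_tail:
  assumes x: "x \<in> height_set" "full_block x" and y: "y \<in> tail"
  shows "bigW_less x y"
proof -
  have y': "y \<in> height_set" "\<not> full_block y" using y unfolding tail_def by auto
  note dx = height_set_block_decomposition[OF x(1)] and dy = height_set_block_decomposition[OF y'(1)]
  have "block_start x \<noteq> block_start y" using x(2) y'(2) unfolding full_block_def by force
  moreover have "\<not> bigW_less (block_start y) (block_start x)"
  proof
    assume "bigW_less (block_start y) (block_start x)"
    then have "\<forall>k. bigW_plus (block_start y) k \<in> height_set"
      using full_block_if_below_block_start[OF dy(1) dx(1) _ x(1) block_start_le] x(1)
        height_set_subset_Field by blast
    then show False using y'(2) unfolding full_block_def by blast
  qed
  ultimately have "bigW_less (block_start x) (block_start y)" using bigW_trichotomy[OF dx(3) dy(3)] by blast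
  then have "bigW_less (bigW_plus (block_start x) (block_offset x)) (bigW_plus (block_start y) (block_offset y))"
    by (rule bigW_plus_less_if_block_start_less[OF dx(1) dy(1)])
  then show ?thesis by (simp only: dx(2)[symmetric] dy(2)[symmetric] simp_thms)
qed

lemma tail_block_start_eq:
  assumes "y \<in> tail" "y' \<in> tail"
  shows "block_start y = block_start y'"
proof (rule ccontr)
  assume ne: "block_start y \<noteq> block_start y'"
  have y: "y \<in> height_set" "\<not> full_block y" "y' \<in> height_set" "\<not> full_block y'"
    using assms unfolding tail_def by auto
  note dy = height_set_block_decomposition[OF y(1)] and dy' = height_set_block_decomposition[OF y(3)]
  have le: "(block_start y, y) \<in> bigW" "(block_start y', y') \<in> bigW"
    using block_start_le y(1,3) height_set_subset_Field by blast+
  consider "bigW_less (block_start y) (block_start y')" | "bigW_less (block_start y') (block_start y)"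
    using bigW_trichotomy[OF dy(3) dy'(3)] ne by blast
  then show False
  proof cases
    case 1
    then have "full_block y"
      unfolding full_block_def using full_block_if_below_block_start[OF dy(1) dy'(1) _ y(3) le(2)] by blast
    then show False using y(2) by blast
  next
    case 2
    then have "full_block y'"
      unfolding full_block_def using full_block_if_below_block_start[OF dy'(1) dy(1) _ y(1) le(1)] by blast
    then show False using y(4) by blast
  qed
qed

definition tail_start :: "'a list set" where
  "tail_start = block_start (SOME y. y \<in> tail)"

definition tail_length :: nat where
  "tail_length = (if tail = {} then 0 else (LEAST k. bigW_plus tail_start k \<notin> height_set))"

lemma tail_start:
  assumes "tail \<noteq> {}"
  shows "is_block_start tail_start" "bigW_plus tail_start tail_length \<notin> height_set"
    "\<And>k. k < tail_length \<Longrightarrow> bigW_plus tail_start k \<in> height_set"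
proof -
  have y: "(SOME y. y \<in> tail) \<in> tail" using assms some_in_eq by blast
  then have "(SOME y. y \<in> tail) \<in> height_set" "\<not> full_block (SOME y. y \<in> tail)" unfolding tail_def by auto
  then have ex: "\<exists>k. bigW_plus tail_start k \<notin> height_set"
    and "is_block_start tail_start"
    using height_set_block_decomposition(1) unfolding full_block_def tail_start_def by blast+
  then show "is_block_start tail_start" by blast
  show "bigW_plus tail_start tail_length \<notin> height_set"
    unfolding tail_length_def using assms LeastI_ex[OF ex] by simp
  show "bigW_plus tail_start k \<in> height_set" if "k < tail_length" for k
  proof -
    have "k < (LEAST k. bigW_plus tail_start k \<notin> height_set)"
      using that assms unfolding tail_length_def by simp
    then show ?thesis by (rule not_less_Least[THEN notnotD])
  qed
qed

lemma tail_eq: "tail = bigW_plus tail_start ` {..<tail_length}"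
proof (cases "tail = {}")
  case True
  then show ?thesis unfolding tail_length_def by simp
next
  case ne: False
  note ts = tail_start[OF ne]
  have ts_Field: "tail_start \<in> Field bigW" using ts(1) unfolding is_block_start_def by blast
  show ?thesis
  proof (intro equalityI subsetI)
    fix y assume y: "y \<in> tail"
    then have yH: "y \<in> height_set" unfolding tail_def by auto
    have "block_start y = tail_start"
      unfolding tail_start_def using tail_block_start_eq[OF y] ne some_in_eq by blast
    then have y_eq: "y = bigW_plus tail_start (block_offset y)"
      using height_set_block_decomposition(2)[OF yH] by simp
    have "block_offset y < tail_length"
    proof (rule ccontr)
      assume "\<not> block_offset y < tail_length"
      then have "bigW_plus tail_start tail_length \<in> height_set"
        using bigW_plus_mono[OF ts_Field] height_set_downward_closed yH y_eq by (metis not_less)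
      then show False using ts(2) by simp
    qed
    then show "y \<in> bigW_plus tail_start ` {..<tail_length}" using y_eq by blast
  next
    fix y assume "y \<in> bigW_plus tail_start ` {..<tail_length}"
    then obtain k where k: "k < tail_length" "y = bigW_plus tail_start k" by blast
    moreover have "block_start y = tail_start" using block_decomposition_bigW_plus(1)[OF ts(1)] k(2) by simp
    ultimately show "y \<in> tail" using ts(2,3) unfolding tail_def full_block_def by auto
  qed
qed

definition digit_base :: nat where
  "digit_base = Suc (\<Sum>k<tail_length. level_width (bigW_plus tail_start k))"

definition tail_code :: "'a set \<Rightarrow> nat" where
  "tail_code S = (\<Sum>k<tail_length. max_count S (bigW_plus tail_start k) * digit_base ^ k)"

lemma max_count_less_digit_base:
  assumes "S \<subseteq> A" "k < tail_length"
  shows "max_count S (bigW_plus tail_start k) < digit_base"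
proof -
  have "max_count S (bigW_plus tail_start k) \<le> level_width (bigW_plus tail_start k)"
    by (rule max_count_le_level_width[OF assms(1)])
  also have "\<dots> \<le> (\<Sum>k<tail_length. level_width (bigW_plus tail_start k))"
    using assms(2) by (intro member_le_sum) auto
  finally show ?thesis unfolding digit_base_def by simp
qed

lemma tail_code_less_power: "S \<subseteq> A \<Longrightarrow> tail_code S < digit_base ^ tail_length"
  unfolding tail_code_def by (rule sum_digits_less_power) (use max_count_less_digit_base in blast)

lemma tail_code_less:
  assumes S: "S \<subseteq> A" and S': "S' \<subseteq> A"
    and \<beta>: "\<beta> \<in> tail" "max_count S' \<beta> < max_count S \<beta>"
      "\<And>\<gamma>. bigW_less \<beta> \<gamma> \<Longrightarrow> max_count S' \<gamma> = max_count S \<gamma>"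
  shows "tail_code S' < tail_code S"
proof -
  have ts_Field: "tail_start \<in> Field bigW"
    using tail_start(1) \<beta>(1) unfolding is_block_start_def by blast
  obtain n where n: "n < tail_length" "\<beta> = bigW_plus tail_start n" using \<beta>(1) tail_eq by blast
  show ?thesis unfolding tail_code_def
  proof (rule sum_digits_less[where n = n])
    show "\<forall>k<tail_length. max_count S (bigW_plus tail_start k) < digit_base"
      "\<forall>k<tail_length. max_count S' (bigW_plus tail_start k) < digit_base"
      using max_count_less_digit_base S S' by auto
    show "n < tail_length" by fact
    show "max_count S' (bigW_plus tail_start n) < max_count S (bigW_plus tail_start n)" using \<beta>(2) n by simp
    show "\<forall>k. n < k \<longrightarrow> k < tail_length \<longrightarrow>
        max_count S' (bigW_plus tail_start k) = max_count S (bigW_plus tail_start k)"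
      using bigW_plus_strict_mono[OF ts_Field] \<beta>(3) n(2) by blast
  qed
qed

lemma tail_code_eq:
  assumes "\<beta> \<in> height_set" "full_block \<beta>"
    "\<And>\<gamma>. bigW_less \<beta> \<gamma> \<Longrightarrow> max_count S' \<gamma> = max_count S \<gamma>"
  shows "tail_code S' = tail_code S"
  unfolding tail_code_def
proof (rule sum.cong[OF refl])
  fix k assume "k \<in> {..<tail_length}"
  then have "bigW_plus tail_start k \<in> tail" using tail_eq by blast
  then show "max_count S' (bigW_plus tail_start k) * digit_base ^ k =
      max_count S (bigW_plus tail_start k) * digit_base ^ k"
    using full_block_less_tail assms by simp
qed

lemma code_strict_mono:
  assumes S: "finite S" "S \<subseteq> A" and S': "finite S'" "S' \<subseteq> A"
    and H: "hoare le S' S" "\<not> hoare le S S'"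
  shows "((tail_code S', slot_code S'), (tail_code S, slot_code S))
      \<in> times_nat (two_pow (height A le)) (digit_base ^ tail_length) \<and>
    (tail_code S', slot_code S') \<noteq> (tail_code S, slot_code S)"
proof -
  obtain \<beta> where \<beta>: "\<beta> \<in> height_set" "max_count S' \<beta> < max_count S \<beta>"
    "\<And>\<gamma>. bigW_less \<beta> \<gamma> \<Longrightarrow> max_count S' \<gamma> = max_count S \<gamma>"
    using max_count_less_at_top[OF S S' H] by blast
  have fields: "slot_code S \<in> Field (two_pow (height A le))" "slot_code S' \<in> Field (two_pow (height A le))"
    "tail_code S < digit_base ^ tail_length" "tail_code S' < digit_base ^ tail_length"
    using slot_code_in_Field tail_code_less_power S S' by auto
  show ?thesis
  proof (cases "full_block \<beta>")
    case True
    then have "tail_code S' = tail_code S" using tail_code_eq \<beta>(1,3) by blast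
    then show ?thesis using slot_code_less[OF S S' \<beta>(1) True \<beta>(2,3)] fields
      unfolding times_nat_def by auto
  next
    case False
    then have "tail_code S' < tail_code S" using tail_code_less S(2) S'(2) \<beta> unfolding tail_def by blast
    then show ?thesis using fields unfolding times_nat_def by auto
  qed
qed

lemma slot_code_strict_mono:
  assumes S: "finite S" "S \<subseteq> A" and S': "finite S'" "S' \<subseteq> A"
    and H: "hoare le S' S" "\<not> hoare le S S'" and no_tail: "tail = {}"
  shows "(slot_code S', slot_code S) \<in> two_pow (height A le) \<and> slot_code S' \<noteq> slot_code S"
proof -
  obtain \<beta> where \<beta>: "\<beta> \<in> height_set" "max_count S' \<beta> < max_count S \<beta>"
    "\<And>\<gamma>. bigW_less \<beta> \<gamma> \<Longrightarrow> max_count S' \<gamma> = max_count S \<gamma>"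
    using max_count_less_at_top[OF S S' H] by blast
  have "full_block \<beta>" using \<beta>(1) no_tail unfolding tail_def by blast
  then show ?thesis using slot_code_less[OF S S' \<beta>(1) _ \<beta>(2,3)] by blast
qed

text \<open>A non-full block contains a last element \<open>x\<close> of the height: the least \<open>k\<close> with \<open>b + k\<close>
  outside is a successor, since \<open>b\<close> itself lies inside.\<close>
lemma tail_empty_if_limit:
  assumes "is_limit_ord (height A le)"
  shows "tail = {}"
proof (rule ccontr)
  assume "tail \<noteq> {}"
  note ts = tail_start[OF this]
  define y0 where "y0 = (SOME y. y \<in> tail)"
  have "y0 \<in> tail" unfolding y0_def using \<open>tail \<noteq> {}\<close> by (simp add: some_in_eq)
  then have y0: "y0 \<in> height_set" unfolding tail_def by simp
  have "(tail_start, y0) \<in> bigW"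
    unfolding tail_start_def y0_def[symmetric] by (rule block_start_le[OF subsetD[OF height_set_subset_Field y0]])
  then have "tail_start \<in> height_set" by (rule height_set_downward_closed[OF y0])
  then have "tail_length \<noteq> 0" using ts(2) by (cases tail_length) auto
  then obtain k where k: "tail_length = Suc k" using not0_implies_Suc by blast
  define x where "x = bigW_plus tail_start k"
  have xH: "x \<in> height_set" unfolding x_def using ts(3) k by simp
  have nx: "bigW_succ x \<notin> height_set" using ts(2) k unfolding x_def by (simp add: bigW_plus_Suc)
  have below_x: "(b, x) \<in> bigW" if b: "b \<in> height_set" for b
  proof (rule ccontr)
    assume nbx: "(b, x) \<notin> bigW"
    have "b \<in> Field bigW" "x \<in> Field bigW" using b xH height_set_subset_Field by blast+
    then have "bigW_less x b"
      using bigW_trichotomy[of x b] Well_orderD(3)[OF Well_order_bigW, of b] nbx by blast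
    then have "bigW_succ x \<in> height_set"
      using height_set_downward_closed[OF b bigW_succ_least] by blast
    then show False using nx by blast
  qed
  then have "\<forall>b\<in>height_set. (b, x) \<in> height A le" unfolding height_eq_Restr using xH by blast
  then have "is_successor_ord (height A le)" unfolding is_successor_ord_def Field_height using xH by blast
  then show False using assms unfolding is_limit_ord_def by simp
qed

lemma hoare_refl: "S \<subseteq> A \<Longrightarrow> hoare le S S"
  unfolding hoare_def using qo_refl by blast

text \<open>From an infinite strictly descending sequence of finite sets pick \<open>x\<^sub>i \<in> S\<^sub>i\<close> below no
  element of \<open>S\<^sub>i\<^sub>+\<^sub>1\<close>; a good pair \<open>x\<^sub>i \<le> x\<^sub>j\<close> then puts \<open>x\<^sub>i\<close> below an element of \<open>S\<^sub>i\<^sub>+\<^sub>1\<close>.\<close>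
lemma wf_tree_child_Dec_Pf: "wf (tree_child (Dec (Pf A) (hoare le)))"
proof (rule wf_tree_child_Dec)
  fix S :: "nat \<Rightarrow> 'a set" assume "\<forall>i. S i \<in> Pf A"
  then have SA: "S i \<subseteq> A" for i unfolding Pf_def by blast
  show "\<not> (\<forall>i j. i < j \<longrightarrow> strict (hoare le) (S j) (S i))"
  proof
    assume desc: "\<forall>i j. i < j \<longrightarrow> strict (hoare le) (S j) (S i)"
    have "\<exists>x. x \<in> S i \<and> (\<forall>y\<in>S (Suc i). \<not> le x y)" for i
      using desc unfolding strict_def hoare_def by blast
    then have "\<exists>x. \<forall>i. x i \<in> S i \<and> (\<forall>y\<in>S (Suc i). \<not> le (x i) y)" by (intro choice allI)
    then obtain x where x: "\<And>i. x i \<in> S i" "\<And>i y. y \<in> S (Suc i) \<Longrightarrow> \<not> le (x i) y" by blast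
    have xA: "x i \<in> A" for i using x(1) SA by blast
    obtain i j where ij: "i < j" "le (x i) (x j)" using good[of x] xA by blast
    have "hoare le (S j) (S (Suc i))"
    proof (cases "j = Suc i")
      case True
      then show ?thesis using hoare_refl SA by simp
    next
      case False
      then show ?thesis using desc ij(1) unfolding strict_def by simp
    qed
    then obtain y where y: "y \<in> S (Suc i)" "le (x j) y" using x(1) unfolding hoare_def by blast
    then have "le (x i) y" using qo_trans[OF xA xA _ ij(2) y(2)] SA by blast
    then show False using x(2) y(1) by blast
  qed
qed

definition singletons :: "'a list \<Rightarrow> 'a set list" where
  "singletons t = map (\<lambda>a. {a}) t"

lemma singletons_in_Dec_Pf: "t \<in> Dec A le \<Longrightarrow> singletons t \<in> Dec (Pf A) (hoare le)"
  unfolding mem_Dec_iff singletons_def Pf_def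
  by (auto simp: sorted_wrt_map strict_def hoare_def elim: sorted_wrt_mono_rel[rotated])

lemma Dec_Pf_after_empty: "xs @ [{}] @ w \<in> Dec (Pf A) (hoare le) \<Longrightarrow> w = []"
  unfolding mem_Dec_iff by (cases w) (auto simp: sorted_wrt_append strict_def hoare_def)

lemma singletons_snoc_empty_in_Dec_Pf:
  "t \<in> Dec A le \<Longrightarrow> singletons t @ [{}] \<in> Dec (Pf A) (hoare le)"
  using singletons_in_Dec_Pf[of t] unfolding mem_Dec_iff
  by (auto simp: sorted_wrt_append singletons_def strict_def hoare_def Pf_def)

lemma tree_rank_snoc_empty:
  assumes "xs @ [{}] \<in> Dec (Pf A) (hoare le)"
  shows "tree_rank (Dec (Pf A) (hoare le)) (xs @ [{}]) = tree_rank (Dec (Pf A) (hoare le)) [{}]"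
proof (rule tree_rank_cong[OF wf_tree_child_Dec_Pf], intro allI)
  fix w
  have "[{}] \<in> Dec (Pf A) (hoare le)" using assms unfolding mem_Dec_iff by auto
  then show "(xs @ [{}]) @ w \<in> Dec (Pf A) (hoare le) \<longleftrightarrow> [{}] @ w \<in> Dec (Pf A) (hoare le)"
    using assms Dec_Pf_after_empty[of xs w] Dec_Pf_after_empty[of "[]" w] by auto
qed

text \<open>A branch \<open>a\<^sub>1 > \<dots> > a\<^sub>n\<close> of \<open>Dec A le\<close> becomes the branch \<open>{a\<^sub>1} > \<dots> > {a\<^sub>n}\<close>, which can
  still be extended by \<open>{}\<close>: the extra \<open>1\<close> of \<open>1 + h(A)\<close> is the rank of the node \<open>[{}]\<close>.\<close>
lemma one_plus_height_le: "one_plus (height A le) \<le>o height (Pf A) (hoare le)"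
proof -
  let ?P = "Dec (Pf A) (hoare le)" and ?r = "tree_rank (Dec (Pf A) (hoare le))"
  have P_less: "bigW_less (?r (s @ u)) (?r s)" if "s @ u \<in> ?P" "u \<noteq> []" for s u
    using tree_rank_append_less[OF wf_tree_child_Dec_Pf prefix_closed_Dec that] .
  define g where "g t = ?r (singletons t)" for t
  obtain f where f: "\<And>y. y \<in> Field (height A le) \<Longrightarrow> \<exists>t\<in>Dec A le. t \<noteq> [] \<and> f y = g t"
    "\<And>y y'. (y, y') \<in> height A le \<Longrightarrow> y \<noteq> y' \<Longrightarrow> bigW_less (f y) (f y')"
  proof (rule tree_height_strict_mono_map[OF wf_tree_child_Dec_A Well_order_bigW, of g, folded height_def])
    show "g t \<in> Field bigW" for t unfolding g_def by (rule tree_rank_in_Field[OF wf_tree_child_Dec_Pf])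
    show "bigW_less (g (t @ u)) (g t)" if "t @ u \<in> Dec A le" "u \<noteq> []" for t u
      using P_less[of "singletons t" "singletons u"] singletons_in_Dec_Pf[OF that(1)] that(2)
      unfolding g_def singletons_def by simp
  qed (use Nil_in_Dec in blast)+
  have Field_P: "Field (height (Pf A) (hoare le)) = underS bigW (?r [])"
    unfolding height_def by (rule Field_tree_height)
  have in_height_P: "(a, b) \<in> height (Pf A) (hoare le)"
    if "a \<in> underS bigW (?r [])" "b \<in> underS bigW (?r [])" "(a, b) \<in> bigW" for a b
    using that unfolding height_def tree_height_def by simp
  have f_below_root: "f y \<in> underS bigW (?r [])" if "y \<in> Field (height A le)" for y
    using f(1)[OF that] P_less[of "[]"] singletons_in_Dec_Pf unfolding g_def underS_def singletons_def
    by fastforce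
  have empty_below_f: "bigW_less (?r [{}]) (f y)" if y: "y \<in> Field (height A le)" for y
  proof -
    obtain t where t: "t \<in> Dec A le" "f y = g t" using f(1)[OF y] by blast
    then show ?thesis
      using P_less[OF singletons_snoc_empty_in_Dec_Pf[OF t(1)]] tree_rank_snoc_empty[OF singletons_snoc_empty_in_Dec_Pf[OF t(1)]]
      unfolding g_def by simp
  qed
  have "?r [{}] \<in> underS bigW (?r [])"
    using P_less[of "[]" "[{}]"] unfolding mem_Dec_iff Pf_def underS_def by simp
  show ?thesis
  proof (rule one_plus_ordLeq_if_strict_mono[OF Well_order_height Well_order_tree_height[of ?P, folded height_def]])
    show "f y \<in> Field (height (Pf A) (hoare le))" if "y \<in> Field (height A le)" for y
      using f_below_root[OF that] Field_P by simp
    show "(f y, f y') \<in> height (Pf A) (hoare le) \<and> f y \<noteq> f y'" if "(y, y') \<in> height A le" "y \<noteq> y'" for y y'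
      using f(2)[OF that] f_below_root FieldI1[OF that(1)] FieldI2[OF that(1)] in_height_P by blast
    show "?r [{}] \<in> Field (height (Pf A) (hoare le))" using Field_P \<open>?r [{}] \<in> underS bigW (?r [])\<close> by simp
    show "(?r [{}], f y) \<in> height (Pf A) (hoare le) \<and> ?r [{}] \<noteq> f y" if "y \<in> Field (height A le)" for y
      using empty_below_f[OF that] f_below_root[OF that] \<open>?r [{}] \<in> underS bigW (?r [])\<close> in_height_P by blast
  qed
qed

lemma last_Dec_Pf:
  assumes "t \<in> Dec (Pf A) (hoare le)" "t \<noteq> []"
  shows "finite (last t) \<and> last t \<subseteq> A"
proof -
  have "last t \<in> Pf A" using assms unfolding mem_Dec_iff by auto
  then show ?thesis unfolding Pf_def by auto
qed

lemma last_Dec_Pf_strict: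
  assumes "t @ u \<in> Dec (Pf A) (hoare le)" "t \<noteq> []" "u \<noteq> []"
  shows "hoare le (last (t @ u)) (last t) \<and> \<not> hoare le (last t) (last (t @ u))"
proof -
  have "strict (hoare le) (last u) (last t)"
    using assms unfolding mem_Dec_iff by (auto simp: sorted_wrt_append)
  then show ?thesis using assms(3) unfolding strict_def by simp
qed

lemma height_Pf_le_times_nat:
  "height (Pf A) (hoare le) \<le>o times_nat (two_pow (height A le)) (digit_base ^ tail_length)"
  unfolding height_def[of "Pf A"]
proof (rule tree_height_ordLeq[OF wf_tree_child_Dec_Pf Well_order_times_nat[OF Well_order_two_pow[OF Well_order_height]]])
  show "(tail_code (last t), slot_code (last t)) \<in> Field (times_nat (two_pow (height A le)) (digit_base ^ tail_length))"
    if "t \<in> Dec (Pf A) (hoare le)" "t \<noteq> []" for t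
    using last_Dec_Pf[OF that] tail_code_less_power slot_code_in_Field
    unfolding Field_times_nat[OF Well_order_two_pow[OF Well_order_height]] by simp
  show "((tail_code (last (t @ u)), slot_code (last (t @ u))), (tail_code (last t), slot_code (last t)))
        \<in> times_nat (two_pow (height A le)) (digit_base ^ tail_length) \<and>
      (tail_code (last (t @ u)), slot_code (last (t @ u))) \<noteq> (tail_code (last t), slot_code (last t))"
    if "t \<in> Dec (Pf A) (hoare le)" "t \<noteq> []" "t @ u \<in> Dec (Pf A) (hoare le)" "u \<noteq> []" for t u
    using code_strict_mono last_Dec_Pf[OF that(1,2)] last_Dec_Pf[OF that(3)] last_Dec_Pf_strict[OF that(3,2,4)]
      that(2) by simp
qed (rule Nil_in_Dec)

lemma height_Pf_le_two_pow:
  assumes "is_limit_ord (height A le)"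
  shows "height (Pf A) (hoare le) \<le>o two_pow (height A le)"
  unfolding height_def[of "Pf A"]
proof (rule tree_height_ordLeq[OF wf_tree_child_Dec_Pf Well_order_two_pow[OF Well_order_height]])
  show "slot_code (last t) \<in> Field (two_pow (height A le))" if "t \<in> Dec (Pf A) (hoare le)" "t \<noteq> []" for t
    using last_Dec_Pf[OF that] slot_code_in_Field by simp
  show "(slot_code (last (t @ u)), slot_code (last t)) \<in> two_pow (height A le) \<and>
      slot_code (last (t @ u)) \<noteq> slot_code (last t)"
    if "t \<in> Dec (Pf A) (hoare le)" "t \<noteq> []" "t @ u \<in> Dec (Pf A) (hoare le)" "u \<noteq> []" for t u
    using slot_code_strict_mono last_Dec_Pf[OF that(1,2)] last_Dec_Pf[OF that(3)]
      last_Dec_Pf_strict[OF that(3,2,4)] tail_empty_if_limit[OF assms] that(2) by simp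
qed (rule Nil_in_Dec)

end

theorem mainTheorem2:
  fixes A :: "'a set" and le :: "'a \<Rightarrow> 'a \<Rightarrow> bool"
  assumes "wqo_on A le"
  shows "\<exists>m :: nat.
     (one_plus (height A le), height (Pf A) (hoare le)) \<in> ordLeq \<and>
     (is_limit_ord (height A le) \<longrightarrow> (height (Pf A) (hoare le), two_pow (height A le)) \<in> ordLeq) \<and>
     (is_successor_ord (height A le) \<longrightarrow>
        (height (Pf A) (hoare le), times_nat (two_pow (height A le)) m) \<in> ordLeq)"
proof -
  interpret wqo A le by (rule wqo.intro[OF assms])
  show ?thesis
    using one_plus_height_le height_Pf_le_two_pow height_Pf_le_times_nat by blast
qed

end
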